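(* Let $1\le p<\infty$ and let $d_{w,p}$ be a Lorentz sequence space. Let $J^{\ell_p}$ be the set of all operators $T\in L(d_{w,p})$ that factor through $\ell_p$, i.e. $T=BA$ for some $A\in L(d_{w,p},\ell_p)$ and $B\in L(\ell_p,d_{w,p})$. Then $J^{\ell_p}$ and its norm closure $\overline{J^{\ell_p}}$ are proper (two-sided) ideals in $L(d_{w,p})$.
   Context: Let $1\le p<\infty$ and let $w=(w_n)$ be a real sequence with $w_1=1$, $w_n\downarrow 0$ and $\sum_n w_n=\infty$. The Lorentz sequence space $d_{w,p}$ is the Banach space of all $x=(x_n)\in c_0$ with $\|x\|_{d_{w,p}}=\big(\sum_{n}w_n (x^*_n)^p\big)^{1/p}<\infty$, where $(x^*_n)$ is the non-increasing rearrangement of $(|x_n|)$. $L(X)$ denotes the algebra of bounded linear operators on $X$. An ideal in $L(X)$ is a linear subspace $J$ with $ATB\in J$ whenever $T\in J$, $A,B\in L(X)$; it is proper if $J\ne L(X)$. *)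

theory Defs
  imports "HOL-Analysis.Analysis"
begin

type_synonym seq = "nat \<Rightarrow> real"
type_synonym op = "seq \<Rightarrow> seq"

text \<open>Indices are 0-based: x 0 is the first coordinate, w 0 = w_1.\<close>

definition decr_rearr :: "seq \<Rightarrow> nat \<Rightarrow> real" where
  "decr_rearr x n = Inf {s. 0 \<le> s \<and> finite {k. s < \<bar>x k\<bar>} \<and> card {k. s < \<bar>x k\<bar>} \<le> n}"

definition lorentz_space :: "seq \<Rightarrow> real \<Rightarrow> seq set" where
  "lorentz_space w p = {x. x \<longlonglongrightarrow> 0 \<and> summable (\<lambda>n. w n * decr_rearr x n powr p)}"

definition lorentz_norm :: "seq \<Rightarrow> real \<Rightarrow> seq \<Rightarrow> real" where
  "lorentz_norm w p x = (\<Sum>n. w n * decr_rearr x n powr p) powr (1 / p)"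

definition lp_space :: "real \<Rightarrow> seq set" where
  "lp_space p = {x. summable (\<lambda>n. \<bar>x n\<bar> powr p)}"

definition lp_norm :: "real \<Rightarrow> seq \<Rightarrow> real" where
  "lp_norm p x = (\<Sum>n. \<bar>x n\<bar> powr p) powr (1 / p)"

definition splus :: "seq \<Rightarrow> seq \<Rightarrow> seq" where
  "splus x y = (\<lambda>n. x n + y n)"

definition sminus :: "seq \<Rightarrow> seq \<Rightarrow> seq" where
  "sminus x y = (\<lambda>n. x n - y n)"

definition szero :: seq where
  "szero = (\<lambda>n. 0)"

definition sscale :: "real \<Rightarrow> seq \<Rightarrow> seq" where
  "sscale c x = (\<lambda>n. c * x n)"

text \<open>L(X,Y): bounded linear operators X -> Y, represented extensionally
  (value 0 outside X).\<close>
definition bounded_ops :: "(seq \<Rightarrow> real) \<Rightarrow> seq set \<Rightarrow> (seq \<Rightarrow> real) \<Rightarrow> seq set \<Rightarrow> op set" where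
  "bounded_ops NX X NY Y = {T.
     (\<forall>x\<in>X. T x \<in> Y) \<and>
     (\<forall>x\<in>X. \<forall>y\<in>X. T (splus x y) = splus (T x) (T y)) \<and>
     (\<forall>c. \<forall>x\<in>X. T (sscale c x) = sscale c (T x)) \<and>
     (\<exists>C. \<forall>x\<in>X. NY (T x) \<le> C * NX x) \<and>
     (\<forall>x. x \<notin> X \<longrightarrow> T x = szero)}"

definition op_norm :: "(seq \<Rightarrow> real) \<Rightarrow> seq set \<Rightarrow> (seq \<Rightarrow> real) \<Rightarrow> op \<Rightarrow> real" where
  "op_norm NX X NY T = Sup {NY (T x) | x. x \<in> X \<and> NX x \<le> 1}"

definition is_op_ideal :: "(seq \<Rightarrow> real) \<Rightarrow> seq set \<Rightarrow> op set \<Rightarrow> bool" where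
  "is_op_ideal NX X J \<longleftrightarrow>
     J \<subseteq> bounded_ops NX X NX X \<and>
     (\<lambda>x. szero) \<in> J \<and>
     (\<forall>S\<in>J. \<forall>T\<in>J. (\<lambda>x. splus (S x) (T x)) \<in> J) \<and>
     (\<forall>c. \<forall>T\<in>J. (\<lambda>x. sscale c (T x)) \<in> J) \<and>
     (\<forall>T\<in>J. \<forall>A\<in>bounded_ops NX X NX X. \<forall>B\<in>bounded_ops NX X NX X. A \<circ> T \<circ> B \<in> J)"

definition proper_op_ideal :: "(seq \<Rightarrow> real) \<Rightarrow> seq set \<Rightarrow> op set \<Rightarrow> bool" where
  "proper_op_ideal NX X J \<longleftrightarrow> is_op_ideal NX X J \<and> J \<noteq> bounded_ops NX X NX X"

definition op_closure :: "(seq \<Rightarrow> real) \<Rightarrow> seq set \<Rightarrow> op set \<Rightarrow> op set" where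
  "op_closure NX X J = {T \<in> bounded_ops NX X NX X.
     \<forall>e>0. \<exists>S\<in>J. op_norm NX X NX (\<lambda>x. sminus (T x) (S x)) < e}"

definition factor_lp :: "seq \<Rightarrow> real \<Rightarrow> op set" where
  "factor_lp w p = {B \<circ> A | A B.
     A \<in> bounded_ops (lorentz_norm w p) (lorentz_space w p) (lp_norm p) (lp_space p) \<and>
     B \<in> bounded_ops (lp_norm p) (lp_space p) (lorentz_norm w p) (lorentz_space w p)}"

end

theory Submission
  imports Defs
begin

text \<open>
  Operators factoring through \<open>\<ell>\<^sub>p\<close> are closed under composition with bounded operators
  on both sides, and under sums because \<open>\<ell>\<^sub>p \<oplus> \<ell>\<^sub>p \<cong> \<ell>\<^sub>p\<close> (interleave coordinates);
  the norm closure of an operator ideal is again an ideal.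

  Neither ideal contains the identity. If \<open>\<parallel>I - B A\<parallel> \<le> 1/2\<close> with \<open>A : d\<^sub>w\<^sub>,\<^sub>p \<rightarrow> \<ell>\<^sub>p\<close>,
  then \<open>\<parallel>A e\<^sub>n\<parallel>\<^sub>p\<close> is bounded below. The \<open>A e\<^sub>n\<close> tend to \<open>0\<close> coordinatewise, so a
  gliding hump gives \<open>n\<^sub>1 < n\<^sub>2 < \<dots>\<close> with \<open>\<parallel>\<Sum>\<^sub>i\<^sub><\<^sub>m A e\<^bsub>n\<^sub>i\<^esub>\<parallel>\<^sub>p\<^sup>p \<ge> c m\<close>.
  But \<open>\<parallel>\<Sum>\<^sub>i\<^sub><\<^sub>m e\<^bsub>n\<^sub>i\<^esub>\<parallel>\<^sup>p = \<Sum>\<^sub>n\<^sub><\<^sub>m w\<^sub>n = o(m)\<close> since \<open>w\<^sub>n \<rightarrow> 0\<close>, contradicting the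
  boundedness of \<open>A\<close>.
\<close>

lemma powr_le_powr_imp_le:
  fixes a b p :: real
  assumes "a powr p \<le> b powr p" "0 \<le> a" "0 \<le> b" "0 < p"
  shows "a \<le> b"
  using powr_less_mono2[of p b a] assms by (meson not_le)

lemma add_powr_le_two_powr:
  fixes a b p :: real
  assumes "0 \<le> a" "0 \<le> b" "0 \<le> p"
  shows "(a + b) powr p \<le> 2 powr p * (a powr p + b powr p)"
proof -
  have "(a + b) powr p \<le> (2 * max a b) powr p"
    by (rule powr_mono2) (use assms in auto)
  also have "\<dots> = 2 powr p * max a b powr p"
    using assms by (simp add: powr_mult)
  also have "max a b powr p \<le> a powr p + b powr p"
    by (cases "a \<le> b") (auto simp: max_def)
  finally show ?thesis
    by simp
qed

lemma abs_add_powr_le: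
  fixes u v p :: real
  assumes "0 \<le> p"
  shows "\<bar>u + v\<bar> powr p \<le> 2 powr p * (\<bar>u\<bar> powr p + \<bar>v\<bar> powr p)"
proof -
  have "\<bar>u + v\<bar> powr p \<le> (\<bar>u\<bar> + \<bar>v\<bar>) powr p"
    by (rule powr_mono2) (use assms in auto)
  also have "\<dots> \<le> 2 powr p * (\<bar>u\<bar> powr p + \<bar>v\<bar> powr p)"
    by (rule add_powr_le_two_powr) (use assms in auto)
  finally show ?thesis .
qed

lemma abs_sum_powr_le:
  fixes a :: "'a \<Rightarrow> real"
  assumes "finite I" "0 \<le> p"
  shows "\<bar>\<Sum>i\<in>I. a i\<bar> powr p \<le> real (card I) powr p * (\<Sum>i\<in>I. \<bar>a i\<bar> powr p)"
proof (cases "I = {}")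
  case False
  define M where "M = Max ((\<lambda>i. \<bar>a i\<bar>) ` I)"
  have "M \<in> (\<lambda>i. \<bar>a i\<bar>) ` I"
    unfolding M_def using assms False by (intro Max_in) auto
  then obtain i0 where i0: "i0 \<in> I" "M = \<bar>a i0\<bar>"
    by auto
  have "\<bar>\<Sum>i\<in>I. a i\<bar> \<le> (\<Sum>i\<in>I. \<bar>a i\<bar>)"
    by (rule sum_abs)
  also have "\<dots> \<le> (\<Sum>i\<in>I. M)"
    unfolding M_def using assms by (intro sum_mono) auto
  finally have "\<bar>\<Sum>i\<in>I. a i\<bar> \<le> real (card I) * M"
    by simp
  then have "\<bar>\<Sum>i\<in>I. a i\<bar> powr p \<le> (real (card I) * M) powr p"
    by (rule powr_mono2[rotated 2]) (use assms in auto)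
  also have "\<dots> = real (card I) powr p * M powr p"
    using i0 by (simp add: powr_mult)
  also have "M powr p \<le> (\<Sum>i\<in>I. \<bar>a i\<bar> powr p)"
    using i0 assms by (auto intro!: member_le_sum)
  finally show ?thesis
    by (simp add: mult_left_mono)
qed simp

text \<open>A loss of a factor \<open>2\<^sup>p\<close> on the main term and \<open>m\<^sup>p\<close> on the perturbation
  replaces Minkowski's inequality.\<close>
lemma abs_add_sum_powr_ge:
  fixes a p :: real and b :: "'a \<Rightarrow> real"
  assumes "finite I" "card I \<le> m" "0 \<le> p"
  shows "\<bar>a\<bar> powr p / 2 powr p - real m powr p * (\<Sum>i\<in>I. \<bar>b i\<bar> powr p)
    \<le> \<bar>a + (\<Sum>i\<in>I. b i)\<bar> powr p"
proof -
  define r where "r = (\<Sum>i\<in>I. b i)"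
  have "\<bar>a\<bar> powr p = \<bar>(a + r) + - r\<bar> powr p"
    by simp
  also have "\<dots> \<le> 2 powr p * (\<bar>a + r\<bar> powr p + \<bar>r\<bar> powr p)"
    using abs_add_powr_le[OF assms(3), of "a + r" "- r"] by simp
  finally have "\<bar>a\<bar> powr p / 2 powr p \<le> \<bar>a + r\<bar> powr p + \<bar>r\<bar> powr p"
    by (simp add: divide_le_eq mult.commute)
  moreover have "\<bar>r\<bar> powr p \<le> real m powr p * (\<Sum>i\<in>I. \<bar>b i\<bar> powr p)"
  proof -
    have "\<bar>r\<bar> powr p \<le> real (card I) powr p * (\<Sum>i\<in>I. \<bar>b i\<bar> powr p)"
      unfolding r_def by (rule abs_sum_powr_le) (use assms in auto)
    also have "\<dots> \<le> real m powr p * (\<Sum>i\<in>I. \<bar>b i\<bar> powr p)"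
      using assms by (intro mult_right_mono powr_mono2) (auto intro: sum_nonneg)
    finally show ?thesis .
  qed
  ultimately show ?thesis
    unfolding r_def by linarith
qed

lemma bounded_partial_sums_summable:
  fixes f :: "nat \<Rightarrow> real"
  assumes "\<And>n. 0 \<le> f n" "\<And>n. sum f {..<n} \<le> B"
  shows "summable f" "suminf f \<le> B"
proof -
  show "summable f"
    by (rule bounded_imp_summable[where B = B])
       (use assms(1) assms(2)[of "Suc _"] in \<open>auto simp: lessThan_Suc_atMost\<close>)
  then show "suminf f \<le> B"
    using assms(2) by (rule suminf_le_const)
qed

lemma sum_lessThan_split:
  "a \<le> b \<Longrightarrow> sum f {..<b} = sum f {..<a} + sum f {a..<(b::nat)}"
  by (metis atLeast0LessThan le0 sum.atLeastLessThan_concat)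

lemma sum_lessThan_blocks:
  fixes J :: "nat \<Rightarrow> nat"
  assumes "\<And>k. J k \<le> J (Suc k)" "J 0 = 0"
  shows "sum f {..<J m} = (\<Sum>k<m. sum f {J k..<J (Suc k)})"
proof (induction m)
  case (Suc m)
  then show ?case
    using sum_lessThan_split[OF assms(1)[of m], of f] by simp
qed (simp add: assms(2))

lemma cesaro_mean_small:
  fixes a :: "nat \<Rightarrow> real"
  assumes "a \<longlonglongrightarrow> 0" "0 < e"
  obtains m where "1 \<le> m" "(\<Sum>n<m. a n) \<le> e * real m"
proof -
  obtain K where K: "\<And>n. K \<le> n \<Longrightarrow> a n < e / 2"
    using assms unfolding LIMSEQ_iff by (metis abs_less_iff diff_zero half_gt_zero real_norm_def)
  define S where "S = \<bar>\<Sum>n<K. a n\<bar>"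
  define m where "m = max (max 1 K) (nat \<lceil>2 * S / e\<rceil>)"
  have m: "1 \<le> m" "K \<le> m" "2 * S / e \<le> real m"
    unfolding m_def by linarith+
  have "(\<Sum>n<m. a n) = (\<Sum>n<K. a n) + (\<Sum>n\<in>{K..<m}. a n)"
    by (rule sum_lessThan_split[OF m(2)])
  also have "\<dots> \<le> S + (\<Sum>n\<in>{K..<m}. e / 2)"
    unfolding S_def using K by (intro add_mono sum_mono) (auto intro: less_imp_le)
  also have "\<dots> \<le> S + real m * (e / 2)"
    using assms(2) by simp
  also have "S \<le> real m * (e / 2)"
    using m(3) assms(2) by (simp add: field_simps)
  finally show ?thesis
    using that m(1) by (simp add: algebra_simps)
qed

section \<open>A gliding hump\<close>

lemma gliding_hump_selection:
  fixes g :: "nat \<Rightarrow> nat \<Rightarrow> real"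
  assumes summable: "\<And>n. summable (g n)" and null: "\<And>j. (\<lambda>n. g n j) \<longlonglongrightarrow> 0" and "0 < \<eta>"
  obtains nk J :: "nat \<Rightarrow> nat"
  where "strict_mono nk" "J 0 = 0" "\<And>k. J k \<le> J (Suc k)"
    "\<And>k. sum (g (nk k)) {..<J k} < \<eta>"
    "\<And>k. suminf (g (nk k)) - \<eta> < sum (g (nk k)) {..<J (Suc k)}"
proof -
  \<comment> \<open>A state \<open>(n, b)\<close> holds the previously chosen index and the current block boundary.\<close>
  define R where "R s s' \<longleftrightarrow> fst s < fst s' \<and> sum (g (fst s')) {..<snd s} < \<eta> \<and> snd s \<le> snd s'
    \<and> suminf (g (fst s')) - \<eta> < sum (g (fst s')) {..<snd s'}" for s s' :: "nat \<times> nat"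
  have step: "\<exists>s'. R s s'" for s
  proof -
    have "(\<lambda>n. sum (g n) {..<snd s}) \<longlonglongrightarrow> 0"
      by (rule tendsto_null_sum) (rule null)
    then have "\<forall>\<^sub>F n in sequentially. sum (g n) {..<snd s} < \<eta>"
      using \<open>0 < \<eta>\<close> by (rule order_tendstoD(2))
    then obtain n0 where "\<And>n. n0 \<le> n \<Longrightarrow> sum (g n) {..<snd s} < \<eta>"
      by (auto simp: eventually_sequentially)
    moreover define n where "n = max n0 (Suc (fst s))"
    ultimately have n: "fst s < n" "sum (g n) {..<snd s} < \<eta>"
      by auto
    have "(\<lambda>b. sum (g n) {..<b}) \<longlonglongrightarrow> suminf (g n)"
      by (rule summable_LIMSEQ[OF summable])
    then have "\<forall>\<^sub>F b in sequentially. suminf (g n) - \<eta> < sum (g n) {..<b}"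
      by (rule order_tendstoD(1)) (use \<open>0 < \<eta>\<close> in simp)
    then obtain b0 where "\<And>b. b0 \<le> b \<Longrightarrow> suminf (g n) - \<eta> < sum (g n) {..<b}"
      by (auto simp: eventually_sequentially)
    then have "R s (n, max b0 (snd s))"
      unfolding R_def using n by auto
    then show ?thesis ..
  qed
  obtain f where f: "\<And>k. (k = 0 \<longrightarrow> f k = (0, 0)) \<and> R (f k) (f (Suc k))"
    using dependent_nat_choice[of "\<lambda>k s. k = 0 \<longrightarrow> s = (0, 0)" "\<lambda>_. R"] step by blast
  show ?thesis
  proof
    show "strict_mono (\<lambda>k. fst (f (Suc k)))"
      unfolding strict_mono_Suc_iff using f unfolding R_def by auto
    show "snd (f 0) = 0"
      using f[of 0] by simp
  qed (use f in \<open>auto simp: R_def\<close>)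
qed

lemma gliding_hump:
  fixes g :: "nat \<Rightarrow> nat \<Rightarrow> real"
  assumes nonneg: "\<And>n j. 0 \<le> g n j" and summable: "\<And>n. summable (g n)"
    and null: "\<And>j. (\<lambda>n. g n j) \<longlonglongrightarrow> 0" and "0 < \<eta>"
  obtains nk J :: "nat \<Rightarrow> nat"
  where "strict_mono nk" "J 0 = 0" "\<And>k. J k \<le> J (Suc k)"
    "\<And>k. suminf (g (nk k)) - 2 * \<eta> \<le> sum (g (nk k)) {J k..<J (Suc k)}"
    "\<And>i k. i \<noteq> k \<Longrightarrow> sum (g (nk i)) {J k..<J (Suc k)} \<le> \<eta>"
proof -
  obtain nk J where nk: "strict_mono nk" and J: "J 0 = 0" and J_step: "\<And>k. J k \<le> J (Suc k)"
    and head: "\<And>k. sum (g (nk k)) {..<J k} < \<eta>"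
    and tail: "\<And>k. suminf (g (nk k)) - \<eta> < sum (g (nk k)) {..<J (Suc k)}"
    using gliding_hump_selection[OF summable null \<open>0 < \<eta>\<close>] by blast
  have J_mono: "J i \<le> J k" if "i \<le> k" for i k
    using lift_Suc_mono_le[of J, OF J_step that] .
  have block: "sum (g n) {J k..<J (Suc k)} = sum (g n) {..<J (Suc k)} - sum (g n) {..<J k}" for n k
    using sum_lessThan_split[OF J_step[of k], of "g n"] by simp
  show ?thesis
  proof (rule that[OF nk J J_step])
    show "suminf (g (nk k)) - 2 * \<eta> \<le> sum (g (nk k)) {J k..<J (Suc k)}" for k
      unfolding block using head[of k] tail[of k] by simp
  next
    fix i k :: nat
    assume "i \<noteq> k"
    show "sum (g (nk i)) {J k..<J (Suc k)} \<le> \<eta>"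
    proof (cases "i < k")
      case True
      then have "sum (g (nk i)) {..<J (Suc i)} \<le> sum (g (nk i)) {..<J k}"
        using nonneg J_mono[of "Suc i" k] by (intro sum_mono2) auto
      moreover have "sum (g (nk i)) {..<J (Suc k)} \<le> suminf (g (nk i))"
        using nonneg summable by (intro sum_le_suminf) auto
      ultimately show ?thesis
        unfolding block using tail[of i] by simp
    next
      case False
      then have "sum (g (nk i)) {J k..<J (Suc k)} \<le> sum (g (nk i)) {..<J i}"
        using nonneg J_mono[of "Suc k" i] \<open>i \<noteq> k\<close> by (intro sum_mono2) auto
      then show ?thesis
        using head[of i] by simp
    qed
  qed
qed

lemma block_sum_powr_lower_bound:
  fixes u :: "nat \<Rightarrow> nat \<Rightarrow> real"
  assumes "finite B" "k < m" "0 \<le> p" "0 \<le> \<eta>"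
    and main: "a \<le> (\<Sum>j\<in>B. \<bar>u k j\<bar> powr p)"
    and others: "\<And>i. i < m \<Longrightarrow> i \<noteq> k \<Longrightarrow> (\<Sum>j\<in>B. \<bar>u i j\<bar> powr p) \<le> \<eta>"
  shows "a / 2 powr p - real m powr p * (real m * \<eta>) \<le> (\<Sum>j\<in>B. \<bar>\<Sum>i<m. u i j\<bar> powr p)"
proof -
  define I where "I = {..<m} - {k}"
  have I: "finite I" "card I \<le> m"
    unfolding I_def by (auto intro: order.trans[OF card_Diff1_le])
  have split: "(\<Sum>i<m. u i j) = u k j + (\<Sum>i\<in>I. u i j)" for j
    unfolding I_def using assms(2) by (simp add: sum.remove)
  have "(\<Sum>j\<in>B. \<bar>u k j\<bar> powr p / 2 powr p - real m powr p * (\<Sum>i\<in>I. \<bar>u i j\<bar> powr p))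
      \<le> (\<Sum>j\<in>B. \<bar>\<Sum>i<m. u i j\<bar> powr p)"
    unfolding split using I assms(3) by (intro sum_mono abs_add_sum_powr_ge) auto
  moreover have "(\<Sum>j\<in>B. \<bar>u k j\<bar> powr p / 2 powr p - real m powr p * (\<Sum>i\<in>I. \<bar>u i j\<bar> powr p))
      = (\<Sum>j\<in>B. \<bar>u k j\<bar> powr p) / 2 powr p - real m powr p * (\<Sum>i\<in>I. \<Sum>j\<in>B. \<bar>u i j\<bar> powr p)"
    by (simp add: sum_subtractf sum_divide_distrib sum_distrib_left sum.swap[of _ B I])
  moreover have "(\<Sum>i\<in>I. \<Sum>j\<in>B. \<bar>u i j\<bar> powr p) \<le> real m * \<eta>"
  proof -
    have "(\<Sum>i\<in>I. \<Sum>j\<in>B. \<bar>u i j\<bar> powr p) \<le> (\<Sum>i\<in>I. \<eta>)"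
      using others unfolding I_def by (intro sum_mono) auto
    also have "\<dots> \<le> real m * \<eta>"
      using I(2) assms(4) by (simp add: mult_right_mono)
    finally show ?thesis .
  qed
  ultimately show ?thesis
    using main mult_left_mono[of _ "real m * \<eta>" "real m powr p"]
      divide_right_mono[OF main, of "2 powr p"] by fastforce
qed

section \<open>The decreasing rearrangement\<close>

abbreviation rearr_levels :: "seq \<Rightarrow> nat \<Rightarrow> real set" where
  "rearr_levels x n \<equiv> {s. 0 \<le> s \<and> finite {k. s < \<bar>x k\<bar>} \<and> card {k. s < \<bar>x k\<bar>} \<le> n}"

lemma rearr_levels_nonempty:
  assumes "Bseq x"
  shows "rearr_levels x n \<noteq> {}"
proof -
  obtain K where "0 < K" "\<And>k. \<bar>x k\<bar> \<le> K"
    using assms by (auto elim!: BseqE)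
  then have "{k. K < \<bar>x k\<bar>} = {}"
    by (auto simp: not_less)
  then have "K \<in> rearr_levels x n"
    using \<open>0 < K\<close> by simp
  then show ?thesis
    by blast
qed

lemma decr_rearr_le: "s \<in> rearr_levels x n \<Longrightarrow> decr_rearr x n \<le> s"
  unfolding decr_rearr_def by (rule cInf_lower) (auto intro: bdd_belowI[of _ 0])

lemma decr_rearr_ge:
  "Bseq x \<Longrightarrow> (\<And>s. s \<in> rearr_levels x n \<Longrightarrow> c \<le> s) \<Longrightarrow> c \<le> decr_rearr x n"
  unfolding decr_rearr_def by (rule cInf_greatest[OF rearr_levels_nonempty]) auto

lemma decr_rearr_nonneg: "Bseq x \<Longrightarrow> 0 \<le> decr_rearr x n"
  by (rule decr_rearr_ge) auto

lemma decr_rearr_antimono: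
  assumes "Bseq x" "m \<le> n"
  shows "decr_rearr x n \<le> decr_rearr x m"
  unfolding decr_rearr_def
  by (rule cInf_superset_mono[OF rearr_levels_nonempty[OF assms(1)]])
     (use assms(2) in \<open>auto intro: bdd_belowI[of _ 0]\<close>)

lemma abs_le_decr_rearr_0:
  assumes "Bseq x"
  shows "\<bar>x k\<bar> \<le> decr_rearr x 0"
proof (rule decr_rearr_ge[OF assms])
  fix s
  assume "s \<in> rearr_levels x 0"
  then have "{k. s < \<bar>x k\<bar>} = {}"
    by auto
  then show "\<bar>x k\<bar> \<le> s"
    by (auto simp: not_less)
qed

lemma decr_rearr_splus_le:
  assumes "Bseq x" "Bseq y"
  shows "decr_rearr (splus x y) (m + n) \<le> decr_rearr x m + decr_rearr y n"
proof -
  have levels: "s + t \<in> rearr_levels (splus x y) (m + n)"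
    if s: "s \<in> rearr_levels x m" and t: "t \<in> rearr_levels y n" for s t
  proof -
    have sub: "{k. s + t < \<bar>splus x y k\<bar>} \<subseteq> {k. s < \<bar>x k\<bar>} \<union> {k. t < \<bar>y k\<bar>}"
      unfolding splus_def by auto
    have fin: "finite ({k. s < \<bar>x k\<bar>} \<union> {k. t < \<bar>y k\<bar>})"
      using s t by auto
    have "card {k. s + t < \<bar>splus x y k\<bar>} \<le> card ({k. s < \<bar>x k\<bar>} \<union> {k. t < \<bar>y k\<bar>})"
      by (rule card_mono[OF fin sub])
    also have "\<dots> \<le> card {k. s < \<bar>x k\<bar>} + card {k. t < \<bar>y k\<bar>}"
      by (rule card_Un_le)
    finally show ?thesis
      using s t finite_subset[OF sub fin] by auto
  qed
  have "decr_rearr (splus x y) (m + n) - t \<le> decr_rearr x m" if "t \<in> rearr_levels y n" for t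
    using decr_rearr_le[OF levels] that by (intro decr_rearr_ge[OF assms(1)]) force
  then have "decr_rearr (splus x y) (m + n) - decr_rearr x m \<le> decr_rearr y n"
    by (intro decr_rearr_ge[OF assms(2)]) force
  then show ?thesis
    by simp
qed

lemma decr_rearr_sscale_le:
  assumes "Bseq x" "c \<noteq> 0"
  shows "decr_rearr (sscale c x) n \<le> \<bar>c\<bar> * decr_rearr x n"
proof -
  have "decr_rearr (sscale c x) n / \<bar>c\<bar> \<le> s" if s: "s \<in> rearr_levels x n" for s
  proof -
    have "{k. \<bar>c\<bar> * s < \<bar>sscale c x k\<bar>} = {k. s < \<bar>x k\<bar>}"
      using assms(2) by (auto simp: sscale_def abs_mult)
    then have "decr_rearr (sscale c x) n \<le> \<bar>c\<bar> * s"
      using s by (intro decr_rearr_le) auto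
    then show ?thesis
      using assms(2) by (simp add: divide_le_eq mult.commute)
  qed
  then have "decr_rearr (sscale c x) n / \<bar>c\<bar> \<le> decr_rearr x n"
    by (intro decr_rearr_ge[OF assms(1)])
  then show ?thesis
    using assms(2) by (simp add: divide_le_eq mult.commute)
qed

lemma decr_rearr_sscale:
  assumes "Bseq x"
  shows "decr_rearr (sscale c x) n = \<bar>c\<bar> * decr_rearr x n"
proof (cases "c = 0")
  case True
  have "sscale c x = (\<lambda>_. 0)"
    using True by (simp add: sscale_def)
  moreover have "decr_rearr (\<lambda>_. 0) n \<le> 0"
    by (rule decr_rearr_le) simp
  ultimately show ?thesis
    using True decr_rearr_nonneg[of "\<lambda>_. 0 :: real"] by (simp add: antisym)
next
  case False
  have "Bseq (sscale c x)"
    using Bseq_mult[OF Bfun_const assms] unfolding sscale_def .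
  then have "decr_rearr x n \<le> \<bar>1 / c\<bar> * decr_rearr (sscale c x) n"
    using decr_rearr_sscale_le[of "sscale c x" "1 / c" n] False
    by (simp add: sscale_def)
  then have "\<bar>c\<bar> * decr_rearr x n \<le> decr_rearr (sscale c x) n"
    using False by (simp add: field_simps abs_divide)
  then show ?thesis
    using decr_rearr_sscale_le[OF assms False, of n] by linarith
qed

definition sign_vector :: "nat set \<Rightarrow> (nat \<Rightarrow> real) \<Rightarrow> seq" where
  "sign_vector F s = (\<lambda>k. if k \<in> F then s k else 0)"

definition unit_vector :: "nat \<Rightarrow> seq" where
  "unit_vector n = sign_vector {n} (\<lambda>_. 1)"

lemma unit_vector_same [simp]: "unit_vector n n = 1"
  by (simp add: unit_vector_def sign_vector_def)

lemma sign_vector_empty: "sign_vector {} s = szero"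
  by (simp add: sign_vector_def szero_def)

lemma sign_vector_insert:
  "a \<notin> F \<Longrightarrow> sign_vector (insert a F) s = splus (sscale (s a) (unit_vector a)) (sign_vector F s)"
  by (auto simp: sign_vector_def unit_vector_def splus_def sscale_def)

lemma decr_rearr_sign_vector:
  assumes "finite F" "\<And>k. k \<in> F \<Longrightarrow> \<bar>s k\<bar> = 1"
  shows "decr_rearr (sign_vector F s) n = (if n < card F then 1 else 0)"
proof -
  let ?x = "sign_vector F s"
  have above: "{k. t < \<bar>?x k\<bar>} = {}" if "1 \<le> t" for t
    using that assms(2) by (auto simp: sign_vector_def)
  have below: "{k. t < \<bar>?x k\<bar>} = F" if "0 \<le> t" "t < 1" for t
    using that assms(2) by (auto simp: sign_vector_def)
  have "rearr_levels ?x n = (if n < card F then {1..} else {0..})"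
  proof (intro set_eqI iffI)
    fix t
    assume t: "t \<in> rearr_levels ?x n"
    show "t \<in> (if n < card F then {1..} else {0..})"
      using t below[of t] by (cases "t < 1") auto
  next
    fix t :: real
    assume "t \<in> (if n < card F then {1..} else {0..})"
    then show "t \<in> rearr_levels ?x n"
      using above[of t] below[of t] assms(1) by (cases "t < 1"; cases "n < card F") auto
  qed
  then show ?thesis
    unfolding decr_rearr_def by simp
qed

lemma bounded_opsI:
  assumes "\<And>x. x \<in> X \<Longrightarrow> T x \<in> Y"
    and "\<And>x y. x \<in> X \<Longrightarrow> y \<in> X \<Longrightarrow> T (splus x y) = splus (T x) (T y)"
    and "\<And>c x. x \<in> X \<Longrightarrow> T (sscale c x) = sscale c (T x)"
    and "\<And>x. x \<in> X \<Longrightarrow> NY (T x) \<le> C * NX x"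
    and "\<And>x. x \<notin> X \<Longrightarrow> T x = szero"
  shows "T \<in> bounded_ops NX X NY Y"
  unfolding bounded_ops_def using assms by blast

lemma
  assumes "T \<in> bounded_ops NX X NY Y"
  shows bounded_ops_into: "x \<in> X \<Longrightarrow> T x \<in> Y"
    and bounded_ops_splus: "x \<in> X \<Longrightarrow> y \<in> X \<Longrightarrow> T (splus x y) = splus (T x) (T y)"
    and bounded_ops_sscale: "x \<in> X \<Longrightarrow> T (sscale c x) = sscale c (T x)"
    and bounded_ops_outside: "x \<notin> X \<Longrightarrow> T x = szero"
  using assms unfolding bounded_ops_def by blast+

lemma bounded_ops_szero:
  assumes "T \<in> bounded_ops NX X NY Y" "szero \<in> X"
  shows "T szero = szero"
proof -
  have "sscale 0 szero = szero" "sscale 0 (T szero) = szero"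
    by (simp_all add: sscale_def szero_def)
  then show ?thesis
    using bounded_ops_sscale[OF assms, of 0] by simp
qed

lemma bounded_ops_pos_bound:
  assumes "T \<in> bounded_ops NX X NY Y" "\<And>x. 0 \<le> NX x"
  obtains C where "0 < C" "\<And>x. x \<in> X \<Longrightarrow> NY (T x) \<le> C * NX x"
proof -
  obtain C where C: "\<And>x. x \<in> X \<Longrightarrow> NY (T x) \<le> C * NX x"
    using assms(1) unfolding bounded_ops_def by blast
  have "NY (T x) \<le> (max C 0 + 1) * NX x" if "x \<in> X" for x
    using order.trans[OF C[OF that] mult_right_mono[of C "max C 0 + 1" "NX x"]] assms(2)[of x]
    by simp
  then show ?thesis
    using that[of "max C 0 + 1"] by simp
qed

lemma bounded_ops_comp:
  assumes T1: "T1 \<in> bounded_ops NX X NY Y" and T2: "T2 \<in> bounded_ops NY Y NZ Z"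
    and "szero \<in> Y" "\<And>y. 0 \<le> NY y"
  shows "T2 \<circ> T1 \<in> bounded_ops NX X NZ Z"
proof -
  obtain C1 where C1: "\<And>x. x \<in> X \<Longrightarrow> NY (T1 x) \<le> C1 * NX x"
    using T1 unfolding bounded_ops_def by blast
  obtain C2 where "0 < C2" and C2: "\<And>y. y \<in> Y \<Longrightarrow> NZ (T2 y) \<le> C2 * NY y"
    using bounded_ops_pos_bound[OF T2 assms(4)] by blast
  show ?thesis
  proof (rule bounded_opsI[where C = "C2 * C1"])
    fix x
    assume x: "x \<in> X"
    have "NZ (T2 (T1 x)) \<le> C2 * NY (T1 x)"
      using C2 bounded_ops_into[OF T1 x] .
    also have "\<dots> \<le> C2 * (C1 * NX x)"
      using C1[OF x] \<open>0 < C2\<close> by (intro mult_left_mono) auto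
    finally show "NZ ((T2 \<circ> T1) x) \<le> C2 * C1 * NX x"
      by (simp add: mult.assoc)
  qed (use T1 T2 assms(3) in \<open>auto simp: bounded_ops_into bounded_ops_splus bounded_ops_sscale
        bounded_ops_outside bounded_ops_szero\<close>)
qed

lemma bounded_ops_const_szero:
  assumes "szero \<in> Y" "NY szero = 0" "\<And>x. 0 \<le> NX x"
  shows "(\<lambda>x. szero) \<in> bounded_ops NX X NY Y"
  by (rule bounded_opsI[where C = 0]) (use assms in \<open>auto simp: splus_def sscale_def szero_def\<close>)

section \<open>The space \<open>\<ell>\<^sub>p\<close>\<close>

definition interleave :: "seq \<Rightarrow> seq \<Rightarrow> seq" where
  "interleave a b = (\<lambda>j. if even j then a (j div 2) else b (j div 2))"

lemma interleave_szero: "interleave szero szero = szero"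
  by (auto simp: interleave_def szero_def)

lemma interleave_comp_even [simp]: "interleave a b \<circ> (\<lambda>n. 2 * n) = a"
  and interleave_comp_odd [simp]: "interleave a b \<circ> (\<lambda>n. Suc (2 * n)) = b"
  by (auto simp: interleave_def)

lemma sum_lessThan_double_even_odd:
  fixes f :: "nat \<Rightarrow> real"
  shows "(\<Sum>j<2 * M. f j) = (\<Sum>n<M. f (2 * n)) + (\<Sum>n<M. f (2 * n + 1))"
  by (induction M) auto

locale lp_exponent =
  fixes p :: real
  assumes p_pos: "0 < p"
begin

abbreviation "LP \<equiv> lp_space p"
abbreviation "NP \<equiv> lp_norm p"
abbreviation lp_sum :: "seq \<Rightarrow> real" where
  "lp_sum z \<equiv> \<Sum>n. \<bar>z n\<bar> powr p"

lemma lp_summable: "z \<in> LP \<Longrightarrow> summable (\<lambda>n. \<bar>z n\<bar> powr p)"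
  unfolding lp_space_def by simp

lemma lp_norm_nonneg: "0 \<le> NP z"
  unfolding lp_norm_def by simp

lemma lp_norm_powr: "z \<in> LP \<Longrightarrow> NP z powr p = lp_sum z"
  unfolding lp_norm_def using p_pos by (simp add: powr_powr lp_summable suminf_nonneg)

lemma lp_norm_le:
  assumes "z \<in> LP" "0 \<le> c" "lp_sum z \<le> c powr p"
  shows "NP z \<le> c"
  by (rule powr_le_powr_imp_le[where p = p]) (use assms lp_norm_powr lp_norm_nonneg p_pos in auto)

lemma lp_sum_le:
  assumes "z \<in> LP" "NP z \<le> c"
  shows "lp_sum z \<le> c powr p"
  using powr_mono2[OF less_imp_le[OF p_pos] lp_norm_nonneg assms(2)] lp_norm_powr[OF assms(1)]
  by simp

lemma abs_le_lp_norm: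
  assumes "z \<in> LP"
  shows "\<bar>z j\<bar> \<le> NP z"
proof -
  have "\<bar>z j\<bar> powr p \<le> lp_sum z"
    using sum_le_suminf[OF lp_summable[OF assms], of "{j}"] by simp
  then show ?thesis
    using lp_norm_powr[OF assms] by (intro powr_le_powr_imp_le[OF _ _ lp_norm_nonneg p_pos]) auto
qed

lemma szero_lp: "szero \<in> LP" "NP szero = 0"
  unfolding lp_space_def lp_norm_def szero_def by auto

lemma sscale_lp: "z \<in> LP \<Longrightarrow> sscale c z \<in> LP"
  unfolding lp_space_def sscale_def by (auto simp: abs_mult powr_mult intro: summable_mult)

lemma splus_lp:
  assumes "z1 \<in> LP" "z2 \<in> LP"
  shows "splus z1 z2 \<in> LP"
proof -
  have "summable (\<lambda>n. 2 powr p * (\<bar>z1 n\<bar> powr p + \<bar>z2 n\<bar> powr p))"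
    using assms by (intro summable_mult summable_add lp_summable)
  then show ?thesis
    unfolding lp_space_def splus_def mem_Collect_eq
    by (rule summable_comparison_test'[where N = 0]) (use abs_add_powr_le p_pos in auto)
qed

lemma reindex_lp:
  assumes "z \<in> LP" "inj \<sigma>"
  shows "z \<circ> \<sigma> \<in> LP" "NP (z \<circ> \<sigma>) \<le> NP z"
proof -
  have "summable ((\<lambda>n. \<bar>z n\<bar> powr p) \<circ> \<sigma>)"
    and le: "suminf ((\<lambda>n. \<bar>z n\<bar> powr p) \<circ> \<sigma>) \<le> lp_sum z"
    using summable_reindex suminf_reindex_mono lp_summable[OF assms(1)] assms(2) by auto
  then show "z \<circ> \<sigma> \<in> LP"
    unfolding lp_space_def by (simp add: o_def)
  then show "NP (z \<circ> \<sigma>) \<le> NP z"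
    using le by (intro lp_norm_le) (auto simp: lp_norm_nonneg lp_norm_powr[OF assms(1)] o_def)
qed

lemma interleave_lp:
  assumes "a \<in> LP" "b \<in> LP"
  shows "interleave a b \<in> LP" "lp_sum (interleave a b) \<le> lp_sum a + lp_sum b"
proof -
  have "(\<Sum>j<M. \<bar>interleave a b j\<bar> powr p) \<le> lp_sum a + lp_sum b" for M
  proof -
    have "(\<Sum>j<M. \<bar>interleave a b j\<bar> powr p) \<le> (\<Sum>j<2 * M. \<bar>interleave a b j\<bar> powr p)"
      by (rule sum_mono2) auto
    also have "\<dots> = (\<Sum>n<M. \<bar>a n\<bar> powr p) + (\<Sum>n<M. \<bar>b n\<bar> powr p)"
      unfolding sum_lessThan_double_even_odd by (simp add: interleave_def)
    also have "\<dots> \<le> lp_sum a + lp_sum b"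
      using assms by (intro add_mono sum_le_suminf lp_summable) auto
    finally show ?thesis .
  qed
  then show "interleave a b \<in> LP" "lp_sum (interleave a b) \<le> lp_sum a + lp_sum b"
    using bounded_partial_sums_summable[of "\<lambda>j. \<bar>interleave a b j\<bar> powr p"]
    unfolding lp_space_def by auto
qed

lemma lp_norm_interleave_le:
  assumes a: "a \<in> LP" and b: "b \<in> LP" and "NP a \<le> c" "NP b \<le> c"
  shows "NP (interleave a b) \<le> 2 powr (1 / p) * c"
proof -
  have "0 \<le> c"
    using lp_norm_nonneg[of a] assms(3) by simp
  have "lp_sum (interleave a b) \<le> 2 * c powr p"
    using interleave_lp(2)[OF a b] lp_sum_le[OF a assms(3)] lp_sum_le[OF b assms(4)] by simp
  also have "\<dots> = (2 powr (1 / p) * c) powr p"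
    using \<open>0 \<le> c\<close> p_pos by (simp add: powr_mult powr_powr)
  finally show ?thesis
    using \<open>0 \<le> c\<close> by (intro lp_norm_le[OF interleave_lp(1)[OF a b]]) auto
qed

definition reindex_op :: "(nat \<Rightarrow> nat) \<Rightarrow> seq \<Rightarrow> seq" where
  "reindex_op \<sigma> z = (if z \<in> LP then z \<circ> \<sigma> else szero)"

lemma reindex_op_bounded:
  assumes "inj \<sigma>"
  shows "reindex_op \<sigma> \<in> bounded_ops NP LP NP LP"
proof (rule bounded_opsI[where C = 1])
  fix y z
  assume "y \<in> LP" "z \<in> LP"
  then show "reindex_op \<sigma> (splus y z) = splus (reindex_op \<sigma> y) (reindex_op \<sigma> z)"
    using splus_lp by (simp add: reindex_op_def splus_def o_def)
next
  fix c z
  assume "z \<in> LP"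
  then show "reindex_op \<sigma> (sscale c z) = sscale c (reindex_op \<sigma> z)"
    using sscale_lp by (simp add: reindex_op_def sscale_def o_def)
qed (use assms reindex_lp in \<open>auto simp: reindex_op_def\<close>)

lemma bounded_ops_interleave:
  assumes A1: "A1 \<in> bounded_ops NX X NP LP" and A2: "A2 \<in> bounded_ops NX X NP LP"
    and NX: "\<And>x. 0 \<le> NX x"
  shows "(\<lambda>x. interleave (A1 x) (A2 x)) \<in> bounded_ops NX X NP LP"
proof -
  obtain C1 where "0 < C1" and C1: "\<And>x. x \<in> X \<Longrightarrow> NP (A1 x) \<le> C1 * NX x"
    using bounded_ops_pos_bound[OF A1 NX] by blast
  obtain C2 where "0 < C2" and C2: "\<And>x. x \<in> X \<Longrightarrow> NP (A2 x) \<le> C2 * NX x"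
    using bounded_ops_pos_bound[OF A2 NX] by blast
  show ?thesis
  proof (rule bounded_opsI[where C = "2 powr (1 / p) * (C1 + C2)"])
    fix x
    assume x: "x \<in> X"
    have a: "A1 x \<in> LP" "A2 x \<in> LP"
      using bounded_ops_into A1 A2 x by blast+
    then show "interleave (A1 x) (A2 x) \<in> LP"
      by (rule interleave_lp)
    have "NP (A1 x) \<le> (C1 + C2) * NX x" "NP (A2 x) \<le> (C1 + C2) * NX x"
      using order.trans[OF C1[OF x] mult_right_mono[of C1 "C1 + C2" "NX x"]]
        order.trans[OF C2[OF x] mult_right_mono[of C2 "C1 + C2" "NX x"]]
        \<open>0 < C1\<close> \<open>0 < C2\<close> NX[of x] by auto
    then show "NP (interleave (A1 x) (A2 x)) \<le> 2 powr (1 / p) * (C1 + C2) * NX x"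
      using lp_norm_interleave_le[OF a] by (simp add: mult.assoc)
  next
    fix x y
    assume "x \<in> X" "y \<in> X"
    then have "A1 (splus x y) = splus (A1 x) (A1 y)" "A2 (splus x y) = splus (A2 x) (A2 y)"
      using bounded_ops_splus A1 A2 by blast+
    then show "interleave (A1 (splus x y)) (A2 (splus x y))
        = splus (interleave (A1 x) (A2 x)) (interleave (A1 y) (A2 y))"
      by (simp only:) (auto simp: interleave_def splus_def)
  next
    fix c x
    assume "x \<in> X"
    then have "A1 (sscale c x) = sscale c (A1 x)" "A2 (sscale c x) = sscale c (A2 x)"
      using bounded_ops_sscale A1 A2 by blast+
    then show "interleave (A1 (sscale c x)) (A2 (sscale c x)) = sscale c (interleave (A1 x) (A2 x))"
      by (simp only:) (auto simp: interleave_def sscale_def)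
  next
    fix x
    assume "x \<notin> X"
    then show "interleave (A1 x) (A2 x) = szero"
      using bounded_ops_outside[OF A1] bounded_ops_outside[OF A2] interleave_szero by simp
  qed
qed

lemma lp_sum_lower_estimate:
  assumes y: "\<And>n. y n \<in> LP" and null: "\<And>j. (\<lambda>n. y n j) \<longlonglongrightarrow> 0"
    and "0 < c" and c: "\<And>n. c \<le> lp_sum (y n)"
  obtains nk b where "strict_mono nk"
    "real m * (c / 2 powr (p + 2)) \<le> (\<Sum>j<b. \<bar>\<Sum>i<m. y (nk i) j\<bar> powr p)"
proof -
  define K where "K = real m powr p * real m"
  define d where "d = c / 2 powr (p + 2)"
  have "0 \<le> K" "0 < d"
    unfolding K_def d_def using \<open>0 < c\<close> by simp_all
  define \<eta> where "\<eta> = min (c / 4) (d / (K + 1))"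
  have "0 < \<eta>"
    unfolding \<eta>_def using \<open>0 < c\<close> \<open>0 \<le> K\<close> \<open>0 < d\<close> by simp
  have "\<eta> \<le> c / 4"
    unfolding \<eta>_def by (rule min.cobounded1)
  have "K * \<eta> \<le> K * (d / (K + 1))"
    unfolding \<eta>_def using \<open>0 \<le> K\<close> by (intro mult_left_mono) auto
  also have "\<dots> \<le> d"
    using \<open>0 \<le> K\<close> \<open>0 < d\<close> by (simp add: field_simps)
  finally have \<eta>_small: "real m powr p * (real m * \<eta>) \<le> c / 2 powr (p + 2)"
    unfolding K_def d_def by (simp add: mult.assoc)
  have four: "2 powr (p + 2) = 4 * 2 powr p"
    by (simp add: powr_add)
  have null_powr: "(\<lambda>n. \<bar>y n j\<bar> powr p) \<longlonglongrightarrow> 0" for j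
    by (rule tendsto_zero_powrI[OF tendsto_rabs_zero[OF null] tendsto_const]) (auto simp: p_pos)
  obtain nk J where nk: "strict_mono nk" and J: "J 0 = 0" "\<And>k. J k \<le> J (Suc k)"
    and main: "\<And>k. lp_sum (y (nk k)) - 2 * \<eta> \<le> (\<Sum>j\<in>{J k..<J (Suc k)}. \<bar>y (nk k) j\<bar> powr p)"
    and others: "\<And>i k. i \<noteq> k \<Longrightarrow> (\<Sum>j\<in>{J k..<J (Suc k)}. \<bar>y (nk i) j\<bar> powr p) \<le> \<eta>"
    using gliding_hump[of "\<lambda>n j. \<bar>y n j\<bar> powr p" \<eta>] lp_summable[OF y] \<open>0 < \<eta>\<close> null_powr
    by auto
  have "c / 2 powr (p + 2) \<le> (\<Sum>j\<in>{J k..<J (Suc k)}. \<bar>\<Sum>i<m. y (nk i) j\<bar> powr p)" if "k < m" for k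
  proof -
    have "(c - 2 * \<eta>) / 2 powr p - real m powr p * (real m * \<eta>)
        \<le> (\<Sum>j\<in>{J k..<J (Suc k)}. \<bar>\<Sum>i<m. y (nk i) j\<bar> powr p)"
      using main[of k] c[of "nk k"] others that p_pos \<open>0 < \<eta>\<close>
      by (intro block_sum_powr_lower_bound[where u = "\<lambda>i. y (nk i)"]) auto
    moreover have "c / 2 powr (p + 2) \<le> (c - 2 * \<eta>) / 2 powr p - c / 2 powr (p + 2)"
      using \<open>\<eta> \<le> c / 4\<close> four by (simp add: field_simps)
    ultimately show ?thesis
      using \<eta>_small by linarith
  qed
  then have "real m * (c / 2 powr (p + 2)) \<le> (\<Sum>k<m. \<Sum>j\<in>{J k..<J (Suc k)}. \<bar>\<Sum>i<m. y (nk i) j\<bar> powr p)"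
    using sum_mono[of "{..<m}" "\<lambda>_. c / 2 powr (p + 2)"] by simp
  also have "\<dots> = (\<Sum>j<J m. \<bar>\<Sum>i<m. y (nk i) j\<bar> powr p)"
    by (rule sum_lessThan_blocks[OF J(2) J(1), symmetric])
  finally show ?thesis
    using that nk by blast
qed

end

section \<open>Lorentz sequence spaces\<close>

locale lorentz_weight =
  fixes w :: "nat \<Rightarrow> real" and p :: real
  assumes p_ge_1: "1 \<le> p" and w_0: "w 0 = 1" and w_decseq: "decseq w"
    and w_tendsto_0: "w \<longlonglongrightarrow> 0"

sublocale lorentz_weight \<subseteq> lp_exponent p
  by unfold_locales (use p_ge_1 in simp)

context lorentz_weight
begin

abbreviation "N \<equiv> lorentz_norm w p"
abbreviation "X \<equiv> lorentz_space w p"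
abbreviation "L \<equiv> bounded_ops N X N X"

lemma w_nonneg: "0 \<le> w n"
  using decseq_ge[OF w_decseq w_tendsto_0] .

lemma lorentz_norm_nonneg: "0 \<le> N x"
  unfolding lorentz_norm_def by simp

lemma lorentz_space_tendsto_0: "x \<in> X \<Longrightarrow> x \<longlonglongrightarrow> 0"
  unfolding lorentz_space_def by simp

lemma lorentz_space_Bseq: "x \<in> X \<Longrightarrow> Bseq x"
  using lorentz_space_tendsto_0 convergent_imp_Bseq convergentI by blast

lemma lorentz_summable: "x \<in> X \<Longrightarrow> summable (\<lambda>n. w n * decr_rearr x n powr p)"
  unfolding lorentz_space_def by simp

lemma lorentz_norm_powr:
  assumes "summable (\<lambda>n. w n * decr_rearr x n powr p)"
  shows "N x powr p = (\<Sum>n. w n * decr_rearr x n powr p)"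
proof -
  have "0 \<le> (\<Sum>n. w n * decr_rearr x n powr p)"
    using assms w_nonneg by (intro suminf_nonneg) auto
  then show ?thesis
    unfolding lorentz_norm_def using p_pos by (simp add: powr_powr)
qed

lemma abs_le_lorentz_norm:
  assumes "x \<in> X"
  shows "\<bar>x k\<bar> \<le> N x"
proof -
  have "\<bar>x k\<bar> powr p \<le> decr_rearr x 0 powr p"
    using abs_le_decr_rearr_0[OF lorentz_space_Bseq[OF assms]] p_pos by (intro powr_mono2) auto
  also have "\<dots> = (\<Sum>n\<in>{0}. w n * decr_rearr x n powr p)"
    using w_0 by simp
  also have "\<dots> \<le> (\<Sum>n. w n * decr_rearr x n powr p)"
    using lorentz_summable[OF assms] w_nonneg by (intro sum_le_suminf) auto
  also have "\<dots> = N x powr p"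
    using lorentz_norm_powr[OF lorentz_summable[OF assms]] ..
  finally show ?thesis
    by (rule powr_le_powr_imp_le) (auto simp: p_pos lorentz_norm_nonneg)
qed

lemma sign_vector_lorentz:
  assumes "finite F" "\<And>k. k \<in> F \<Longrightarrow> \<bar>s k\<bar> = 1"
  shows "sign_vector F s \<in> X" "N (sign_vector F s) = (\<Sum>n<card F. w n) powr (1 / p)"
proof -
  let ?x = "sign_vector F s"
  have terms: "w n * decr_rearr ?x n powr p = (if n < card F then w n else 0)" for n
    using decr_rearr_sign_vector[OF assms, where n = n] by simp
  have summable: "summable (\<lambda>n. w n * decr_rearr ?x n powr p)"
    unfolding terms by (rule summable_finite[of "{..<card F}"]) auto
  obtain b where "F \<subseteq> {..<b}"
    using assms(1) finite_nat_iff_bounded by auto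
  then have "\<forall>\<^sub>F k in sequentially. ?x k = 0"
    by (auto simp: eventually_sequentially sign_vector_def intro!: exI[of _ b])
  then have "?x \<longlonglongrightarrow> 0"
    by (rule tendsto_eventually)
  then show "?x \<in> X"
    using summable unfolding lorentz_space_def by simp
  have "(\<Sum>n. w n * decr_rearr ?x n powr p) = (\<Sum>n<card F. w n)"
    unfolding terms by (subst suminf_finite[of "{..<card F}"]) auto
  then show "N ?x = (\<Sum>n<card F. w n) powr (1 / p)"
    unfolding lorentz_norm_def by simp
qed

lemma unit_vector_lorentz: "unit_vector n \<in> X" "N (unit_vector n) = 1"
  using sign_vector_lorentz[of "{n}" "\<lambda>_. 1"] w_0 by (simp_all add: unit_vector_def)

lemma szero_lorentz: "szero \<in> X" "N szero = 0"
  using sign_vector_lorentz[of "{}" "\<lambda>_. 1"] p_pos by (simp_all add: sign_vector_empty)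

lemma sscale_lorentz:
  assumes "x \<in> X"
  shows "sscale c x \<in> X" "N (sscale c x) = \<bar>c\<bar> * N x"
proof -
  have terms: "w n * decr_rearr (sscale c x) n powr p = \<bar>c\<bar> powr p * (w n * decr_rearr x n powr p)"
    for n
    using decr_rearr_sscale[OF lorentz_space_Bseq[OF assms]]
      decr_rearr_nonneg[OF lorentz_space_Bseq[OF assms]]
    by (simp add: powr_mult)
  have "sscale c x \<longlonglongrightarrow> 0"
    using lorentz_space_tendsto_0[OF assms] unfolding sscale_def
    by (rule tendsto_mult_right_zero)
  moreover have "summable (\<lambda>n. w n * decr_rearr (sscale c x) n powr p)"
    unfolding terms using lorentz_summable[OF assms] by (rule summable_mult)
  ultimately show "sscale c x \<in> X"
    unfolding lorentz_space_def by simp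
  have "N (sscale c x) = (\<bar>c\<bar> powr p * (\<Sum>n. w n * decr_rearr x n powr p)) powr (1 / p)"
    unfolding lorentz_norm_def terms using lorentz_summable[OF assms] by (simp add: suminf_mult)
  also have "\<dots> = \<bar>c\<bar> * N x"
    unfolding lorentz_norm_def using p_pos lorentz_summable[OF assms] w_nonneg
    by (simp add: powr_mult powr_powr suminf_nonneg)
  finally show "N (sscale c x) = \<bar>c\<bar> * N x" .
qed

lemma lorentz_norm_eq_0_iff:
  assumes "x \<in> X"
  shows "N x = 0 \<longleftrightarrow> x = szero"
  using abs_le_lorentz_norm[OF assms] szero_lorentz(2) by (fastforce simp: szero_def)

lemma decr_rearr_splus_half:
  assumes "Bseq x" "Bseq y"
  shows "decr_rearr (splus x y) n \<le> decr_rearr x (n div 2) + decr_rearr y (n div 2)"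
proof -
  have "decr_rearr (splus x y) n \<le> decr_rearr x (n div 2) + decr_rearr y (n - n div 2)"
    using decr_rearr_splus_le[OF assms, of "n div 2" "n - n div 2"] by simp
  also have "decr_rearr y (n - n div 2) \<le> decr_rearr y (n div 2)"
    by (rule decr_rearr_antimono[OF assms(2)]) simp
  finally show ?thesis
    by simp
qed

lemma sum_lessThan_double_div2:
  fixes g :: "nat \<Rightarrow> real"
  shows "(\<Sum>n<2 * M. g (n div 2)) = 2 * (\<Sum>k<M. g k)"
  by (induction M) auto

lemma splus_lorentz_tendsto_0: "x \<in> X \<Longrightarrow> y \<in> X \<Longrightarrow> splus x y \<longlonglongrightarrow> 0"
  unfolding splus_def by (intro tendsto_add_zero lorentz_space_tendsto_0)

lemma lorentz_term_splus_le:
  assumes x: "x \<in> X" and y: "y \<in> X"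
  shows "w n * decr_rearr (splus x y) n powr p
    \<le> 2 powr p * (w (n div 2) * decr_rearr x (n div 2) powr p + w (n div 2) * decr_rearr y (n div 2) powr p)"
proof -
  let ?a = "decr_rearr x (n div 2)" and ?b = "decr_rearr y (n div 2)"
  have "Bseq x" "Bseq y"
    using x y by (simp_all add: lorentz_space_Bseq)
  have "Bseq (splus x y)"
    using splus_lorentz_tendsto_0[OF x y] convergent_imp_Bseq convergentI by blast
  have "decr_rearr (splus x y) n powr p \<le> (?a + ?b) powr p"
    using decr_rearr_splus_half[OF \<open>Bseq x\<close> \<open>Bseq y\<close>] decr_rearr_nonneg[OF \<open>Bseq (splus x y)\<close>] p_pos
    by (intro powr_mono2) auto
  also have "\<dots> \<le> 2 powr p * (?a powr p + ?b powr p)"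
    using decr_rearr_nonneg \<open>Bseq x\<close> \<open>Bseq y\<close> p_pos by (intro add_powr_le_two_powr) auto
  finally have "w n * decr_rearr (splus x y) n powr p \<le> w (n div 2) * (2 powr p * (?a powr p + ?b powr p))"
    using decseqD[OF w_decseq, of "n div 2" n] w_nonneg by (intro mult_mono) auto
  then show ?thesis
    by (simp add: algebra_simps)
qed

lemma lorentz_sum_splus_le:
  assumes x: "x \<in> X" and y: "y \<in> X"
  shows "summable (\<lambda>n. w n * decr_rearr (splus x y) n powr p)"
    and "(\<Sum>n. w n * decr_rearr (splus x y) n powr p) \<le> 2 powr (p + 1) * (N x powr p + N y powr p)"
proof -
  define g where "g k = w k * decr_rearr x k powr p + w k * decr_rearr y k powr p" for k
  have g_nonneg: "0 \<le> g k" for k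
    unfolding g_def using w_nonneg by simp
  have g_sums: "g sums (N x powr p + N y powr p)"
    unfolding g_def lorentz_norm_powr[OF lorentz_summable[OF x]] lorentz_norm_powr[OF lorentz_summable[OF y]]
    by (intro sums_add summable_sums lorentz_summable x y)
  have partial: "(\<Sum>n<M. w n * decr_rearr (splus x y) n powr p) \<le> 2 powr (p + 1) * (N x powr p + N y powr p)"
    for M
  proof -
    have "(\<Sum>n<M. w n * decr_rearr (splus x y) n powr p) \<le> (\<Sum>n<M. 2 powr p * g (n div 2))"
      unfolding g_def using lorentz_term_splus_le[OF x y] by (rule sum_mono)
    also have "\<dots> \<le> (\<Sum>n<2 * M. 2 powr p * g (n div 2))"
      using g_nonneg by (intro sum_mono2) auto
    also have "\<dots> = 2 powr (p + 1) * (\<Sum>k<M. g k)"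
      by (simp add: sum_distrib_left[symmetric] sum_lessThan_double_div2 powr_add)
    also have "(\<Sum>k<M. g k) \<le> N x powr p + N y powr p"
      using sum_le_suminf[OF sums_summable[OF g_sums], of "{..<M}"] g_nonneg sums_unique[OF g_sums]
      by simp
    finally show ?thesis
      by simp
  qed
  show "summable (\<lambda>n. w n * decr_rearr (splus x y) n powr p)"
    and "(\<Sum>n. w n * decr_rearr (splus x y) n powr p) \<le> 2 powr (p + 1) * (N x powr p + N y powr p)"
    using bounded_partial_sums_summable[OF _ partial] w_nonneg by simp_all
qed

text \<open>The Lorentz norm satisfies the triangle inequality, but the quasi-triangle inequality
  coming from \<open>(x+y)\<^sup>*\<^sub>n \<le> x\<^sup>*\<^bsub>n div 2\<^esub> + y\<^sup>*\<^bsub>n div 2\<^esub>\<close> is all that is needed here.\<close>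
definition lorentz_qconst :: real where
  "lorentz_qconst = 2 powr ((p + 2) / p)"

lemma lorentz_qconst_pos: "0 < lorentz_qconst"
  unfolding lorentz_qconst_def by simp

lemma splus_lorentz:
  assumes x: "x \<in> X" and y: "y \<in> X"
  shows "splus x y \<in> X" "N (splus x y) \<le> lorentz_qconst * (N x + N y)"
proof -
  show "splus x y \<in> X"
    using splus_lorentz_tendsto_0[OF x y] lorentz_sum_splus_le(1)[OF x y]
    unfolding lorentz_space_def by simp
  have "N x powr p \<le> (N x + N y) powr p" "N y powr p \<le> (N x + N y) powr p"
    using lorentz_norm_nonneg[of x] lorentz_norm_nonneg[of y] p_pos by (auto intro!: powr_mono2)
  have "N (splus x y) powr p = (\<Sum>n. w n * decr_rearr (splus x y) n powr p)"
    by (rule lorentz_norm_powr[OF lorentz_sum_splus_le(1)[OF x y]])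
  also have "\<dots> \<le> 2 powr (p + 1) * (N x powr p + N y powr p)"
    by (rule lorentz_sum_splus_le(2)[OF x y])
  also have "\<dots> \<le> 2 powr (p + 1) * (2 * (N x + N y) powr p)"
    using \<open>N x powr p \<le> _\<close> \<open>N y powr p \<le> _\<close> by (intro mult_left_mono) auto
  also have "\<dots> = (lorentz_qconst * (N x + N y)) powr p"
    unfolding lorentz_qconst_def using p_pos lorentz_norm_nonneg[of x] lorentz_norm_nonneg[of y]
    by (simp add: powr_mult powr_powr powr_add)
  finally show "N (splus x y) \<le> lorentz_qconst * (N x + N y)"
    by (rule powr_le_powr_imp_le)
       (use lorentz_qconst_pos lorentz_norm_nonneg p_pos in \<open>auto intro: add_nonneg_nonneg\<close>)
qed

lemma bounded_ops_sign_vector: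
  assumes A: "A \<in> bounded_ops N X NY Y" and F: "finite F" and s: "\<And>k. k \<in> F \<Longrightarrow> \<bar>s k\<bar> = 1"
  shows "A (sign_vector F s) j = (\<Sum>n\<in>F. s n * A (unit_vector n) j)"
  using F s
proof (induction F rule: finite_induct)
  case empty
  then show ?case
    using bounded_ops_szero[OF A szero_lorentz(1)] by (simp add: sign_vector_empty szero_def)
next
  case (insert a F)
  have "sign_vector F s \<in> X"
    using sign_vector_lorentz insert by auto
  then have "A (sign_vector (insert a F) s) = splus (sscale (s a) (A (unit_vector a))) (A (sign_vector F s))"
    unfolding sign_vector_insert[OF insert(2)]
    by (simp add: bounded_ops_splus[OF A] bounded_ops_sscale[OF A] sscale_lorentz unit_vector_lorentz)
  then show ?case
    using insert by (simp add: splus_def sscale_def)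
qed

lemma bounded_ops_splus_lorentz:
  assumes S: "S \<in> bounded_ops NY Y N X" and T: "T \<in> bounded_ops NY Y N X" and "\<And>y. 0 \<le> NY y"
  shows "(\<lambda>y. splus (S y) (T y)) \<in> bounded_ops NY Y N X"
proof -
  obtain C1 where "0 < C1" and C1: "\<And>y. y \<in> Y \<Longrightarrow> N (S y) \<le> C1 * NY y"
    using bounded_ops_pos_bound[OF S assms(3)] by blast
  obtain C2 where "0 < C2" and C2: "\<And>y. y \<in> Y \<Longrightarrow> N (T y) \<le> C2 * NY y"
    using bounded_ops_pos_bound[OF T assms(3)] by blast
  show ?thesis
  proof (rule bounded_opsI[where C = "lorentz_qconst * (C1 + C2)"])
    fix y
    assume y: "y \<in> Y"
    have "N (splus (S y) (T y)) \<le> lorentz_qconst * (N (S y) + N (T y))"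
      using splus_lorentz bounded_ops_into S T y by blast
    also have "\<dots> \<le> lorentz_qconst * (C1 * NY y + C2 * NY y)"
      using C1[OF y] C2[OF y] lorentz_qconst_pos by (intro mult_left_mono add_mono) auto
    finally show "N (splus (S y) (T y)) \<le> lorentz_qconst * (C1 + C2) * NY y"
      by (simp add: algebra_simps)
  next
    fix y
    assume "y \<in> Y"
    then show "splus (S y) (T y) \<in> X"
      using S T by (simp add: bounded_ops_into splus_lorentz)
  next
    fix y z
    assume "y \<in> Y" "z \<in> Y"
    then have "S (splus y z) = splus (S y) (S z)" "T (splus y z) = splus (T y) (T z)"
      using bounded_ops_splus S T by blast+
    then show "splus (S (splus y z)) (T (splus y z)) = splus (splus (S y) (T y)) (splus (S z) (T z))"
      by (simp only:) (simp add: splus_def algebra_simps)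
  next
    fix c y
    assume "y \<in> Y"
    then have "S (sscale c y) = sscale c (S y)" "T (sscale c y) = sscale c (T y)"
      using bounded_ops_sscale S T by blast+
    then show "splus (S (sscale c y)) (T (sscale c y)) = sscale c (splus (S y) (T y))"
      by (simp only:) (simp add: splus_def sscale_def algebra_simps)
  next
    fix y
    assume "y \<notin> Y"
    then show "splus (S y) (T y) = szero"
      using S T by (simp add: bounded_ops_outside splus_def szero_def)
  qed
qed

lemma bounded_ops_sscale_lorentz:
  assumes T: "T \<in> bounded_ops NY Y N X"
  shows "(\<lambda>y. sscale c (T y)) \<in> bounded_ops NY Y N X"
proof -
  obtain C where C: "\<And>y. y \<in> Y \<Longrightarrow> N (T y) \<le> C * NY y"
    using T unfolding bounded_ops_def by blast
  show ?thesis
  proof (rule bounded_opsI[where C = "\<bar>c\<bar> * C"])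
    fix y
    assume "y \<in> Y"
    then show "N (sscale c (T y)) \<le> \<bar>c\<bar> * C * NY y"
      using sscale_lorentz(2)[OF bounded_ops_into[OF T]] C
      by (simp add: mult.assoc mult_left_mono)
  next
    fix y
    assume "y \<in> Y"
    then show "sscale c (T y) \<in> X"
      using T by (simp add: bounded_ops_into sscale_lorentz)
  next
    fix y z
    assume "y \<in> Y" "z \<in> Y"
    then have "T (splus y z) = splus (T y) (T z)"
      using bounded_ops_splus T by blast
    then show "sscale c (T (splus y z)) = splus (sscale c (T y)) (sscale c (T z))"
      by (simp only:) (simp add: splus_def sscale_def algebra_simps)
  next
    fix d y
    assume "y \<in> Y"
    then have "T (sscale d y) = sscale d (T y)"
      using bounded_ops_sscale T by blast
    then show "sscale c (T (sscale d y)) = sscale d (sscale c (T y))"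
      by (simp only:) (simp add: sscale_def algebra_simps)
  next
    fix y
    assume "y \<notin> Y"
    then show "sscale c (T y) = szero"
      using T by (simp add: bounded_ops_outside sscale_def szero_def)
  qed
qed

lemma sminus_eq_splus_sscale: "sminus u v = splus u (sscale (-1) v)"
  by (auto simp: sminus_def splus_def sscale_def)

lemma sminus_lorentz: "u \<in> X \<Longrightarrow> v \<in> X \<Longrightarrow> sminus u v \<in> X"
  unfolding sminus_eq_splus_sscale by (simp add: splus_lorentz sscale_lorentz)

lemma bounded_ops_sminus_lorentz:
  "S \<in> bounded_ops NY Y N X \<Longrightarrow> T \<in> bounded_ops NY Y N X \<Longrightarrow> (\<And>y. 0 \<le> NY y)
    \<Longrightarrow> (\<lambda>y. sminus (S y) (T y)) \<in> bounded_ops NY Y N X"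
  unfolding sminus_eq_splus_sscale by (intro bounded_ops_splus_lorentz bounded_ops_sscale_lorentz)

lemma bounded_ops_sminus_apply:
  assumes "A \<in> L" "u \<in> X" "v \<in> X"
  shows "A (sminus u v) = sminus (A u) (A v)"
  unfolding sminus_eq_splus_sscale
  using assms by (simp add: bounded_ops_splus bounded_ops_sscale sscale_lorentz)

section \<open>Operator norm and closures of ideals\<close>

lemma op_norm_lt_imp_le:
  assumes T: "T \<in> L" and "op_norm N X N T < e" and x: "x \<in> X"
  shows "N (T x) \<le> e * N x"
proof (cases "N x = 0")
  case True
  then have "x = szero"
    using lorentz_norm_eq_0_iff x by simp
  then show ?thesis
    using bounded_ops_szero[OF T szero_lorentz(1)] szero_lorentz(2) by simp
next
  case False
  then have "0 < N x"
    using lorentz_norm_nonneg[of x] by simp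
  obtain C where C: "\<And>x. x \<in> X \<Longrightarrow> N (T x) \<le> C * N x"
    using T unfolding bounded_ops_def by blast
  have "N (T y) \<le> max C 0" if "y \<in> X" "N y \<le> 1" for y
  proof -
    have "N (T y) \<le> max C 0 * N y"
      using C[OF that(1)] mult_right_mono[of C "max C 0" "N y"] lorentz_norm_nonneg[of y] by simp
    also have "\<dots> \<le> max C 0"
      using that(2) lorentz_norm_nonneg[of y] mult_left_le[of "N y" "max C 0"] by simp
    finally show ?thesis .
  qed
  then have bdd: "bdd_above {N (T x) |x. x \<in> X \<and> N x \<le> 1}"
    by (intro bdd_aboveI[of _ "max C 0"]) blast
  let ?u = "sscale (1 / N x) x"
  have u: "?u \<in> X" "N ?u = 1"
    using sscale_lorentz[OF x, of "1 / N x"] \<open>0 < N x\<close> by auto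
  have "N (T ?u) = N (T x) / N x"
    using bounded_ops_sscale[OF T x] sscale_lorentz(2)[OF bounded_ops_into[OF T x]] \<open>0 < N x\<close>
    by simp
  moreover have "N (T ?u) \<le> op_norm N X N T"
    unfolding op_norm_def by (rule cSup_upper[OF _ bdd]) (use u in auto)
  ultimately have "N (T x) / N x < e"
    using assms(2) by simp
  then show ?thesis
    using \<open>0 < N x\<close> by (simp add: divide_less_eq less_imp_le)
qed

lemma op_norm_le:
  assumes "\<And>x. x \<in> X \<Longrightarrow> N (T x) \<le> c * N x" "0 \<le> c"
  shows "op_norm N X N T \<le> c"
  unfolding op_norm_def
proof (rule cSup_least)
  show "{N (T x) |x. x \<in> X \<and> N x \<le> 1} \<noteq> {}"
    using szero_lorentz by auto
next
  fix r
  assume "r \<in> {N (T x) |x. x \<in> X \<and> N x \<le> 1}"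
  then obtain x where "x \<in> X" "N x \<le> 1" "r = N (T x)"
    by auto
  then show "r \<le> c"
    using assms(1)[of x] assms(2) mult_left_le[of "N x" c] by simp
qed

lemma op_closureD:
  assumes "T \<in> op_closure N X J" "J \<subseteq> L" "0 < e"
  obtains S where "S \<in> J" "\<And>x. x \<in> X \<Longrightarrow> N (sminus (T x) (S x)) \<le> e * N x"
proof -
  obtain S where S: "S \<in> J" "op_norm N X N (\<lambda>x. sminus (T x) (S x)) < e"
    using assms unfolding op_closure_def by blast
  have "(\<lambda>x. sminus (T x) (S x)) \<in> L"
    using assms S(1) unfolding op_closure_def
    by (intro bounded_ops_sminus_lorentz lorentz_norm_nonneg) auto
  then show ?thesis
    using that[OF S(1)] op_norm_lt_imp_le S(2) by blast
qed

lemma op_closureI: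
  assumes "T \<in> L"
    and "\<And>e. 0 < e \<Longrightarrow> \<exists>S\<in>J. \<exists>c. 0 \<le> c \<and> c < e \<and> (\<forall>x\<in>X. N (sminus (T x) (S x)) \<le> c * N x)"
  shows "T \<in> op_closure N X J"
  unfolding op_closure_def
proof (intro CollectI conjI allI impI assms(1))
  fix e :: real
  assume "0 < e"
  then obtain S c where "S \<in> J" "0 \<le> c" "c < e" "\<forall>x\<in>X. N (sminus (T x) (S x)) \<le> c * N x"
    using assms(2) by blast
  then show "\<exists>S\<in>J. op_norm N X N (\<lambda>x. sminus (T x) (S x)) < e"
    using op_norm_le[of "\<lambda>x. sminus (T x) (S x)" c] by force
qed

lemma subset_op_closure:
  assumes "J \<subseteq> L"
  shows "J \<subseteq> op_closure N X J"
proof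
  fix T
  assume "T \<in> J"
  have "sminus (T x) (T x) = szero" for x
    by (simp add: sminus_def szero_def)
  then have "op_norm N X N (\<lambda>x. sminus (T x) (T x)) \<le> 0"
    using szero_lorentz(2) by (intro op_norm_le) auto
  then show "T \<in> op_closure N X J"
    using \<open>T \<in> J\<close> assms unfolding op_closure_def by force
qed

lemma op_closure_subset: "op_closure N X J \<subseteq> L"
  unfolding op_closure_def by auto

lemma op_closure_splus:
  assumes J: "is_op_ideal N X J" and T1: "T1 \<in> op_closure N X J" and T2: "T2 \<in> op_closure N X J"
  shows "(\<lambda>x. splus (T1 x) (T2 x)) \<in> op_closure N X J"
proof (rule op_closureI)
  have JL: "J \<subseteq> L"
    using J unfolding is_op_ideal_def by blast
  have L: "T1 \<in> L" "T2 \<in> L"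
    using T1 T2 op_closure_subset by blast+
  then show "(\<lambda>x. splus (T1 x) (T2 x)) \<in> L"
    by (intro bounded_ops_splus_lorentz lorentz_norm_nonneg)
  fix e :: real
  assume "0 < e"
  define d where "d = e / (4 * lorentz_qconst)"
  have "0 < d"
    unfolding d_def using \<open>0 < e\<close> lorentz_qconst_pos by simp
  obtain S1 where S1: "S1 \<in> J" "\<And>x. x \<in> X \<Longrightarrow> N (sminus (T1 x) (S1 x)) \<le> d * N x"
    using op_closureD[OF T1 JL \<open>0 < d\<close>] by blast
  obtain S2 where S2: "S2 \<in> J" "\<And>x. x \<in> X \<Longrightarrow> N (sminus (T2 x) (S2 x)) \<le> d * N x"
    using op_closureD[OF T2 JL \<open>0 < d\<close>] by blast
  have "N (sminus (splus (T1 x) (T2 x)) (splus (S1 x) (S2 x))) \<le> (2 * lorentz_qconst * d) * N x"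
    if x: "x \<in> X" for x
  proof -
    have "S1 \<in> L" "S2 \<in> L"
      using S1(1) S2(1) JL by blast+
    then have in_X: "sminus (T1 x) (S1 x) \<in> X" "sminus (T2 x) (S2 x) \<in> X"
      using L x by (simp_all add: sminus_lorentz bounded_ops_into)
    have "sminus (splus (T1 x) (T2 x)) (splus (S1 x) (S2 x))
        = splus (sminus (T1 x) (S1 x)) (sminus (T2 x) (S2 x))"
      by (auto simp: sminus_def splus_def)
    then have "N (sminus (splus (T1 x) (T2 x)) (splus (S1 x) (S2 x)))
        \<le> lorentz_qconst * (N (sminus (T1 x) (S1 x)) + N (sminus (T2 x) (S2 x)))"
      using splus_lorentz(2)[OF in_X] by simp
    also have "\<dots> \<le> lorentz_qconst * (d * N x + d * N x)"
      using S1(2)[OF x] S2(2)[OF x] lorentz_qconst_pos by (intro mult_left_mono add_mono) auto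
    finally show ?thesis
      by (simp add: algebra_simps)
  qed
  moreover have "(\<lambda>x. splus (S1 x) (S2 x)) \<in> J"
    using J S1(1) S2(1) unfolding is_op_ideal_def by blast
  moreover have "2 * lorentz_qconst * d < e"
    unfolding d_def using \<open>0 < e\<close> lorentz_qconst_pos by simp
  ultimately show "\<exists>S\<in>J. \<exists>c. 0 \<le> c \<and> c < e \<and> (\<forall>x\<in>X. N (sminus (splus (T1 x) (T2 x)) (S x)) \<le> c * N x)"
    using \<open>0 < d\<close> lorentz_qconst_pos by (intro bexI[of _ "\<lambda>x. splus (S1 x) (S2 x)"] exI[of _ "2 * lorentz_qconst * d"]) auto
qed

lemma op_closure_sscale:
  assumes J: "is_op_ideal N X J" and T: "T \<in> op_closure N X J"
  shows "(\<lambda>x. sscale c (T x)) \<in> op_closure N X J"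
proof (rule op_closureI)
  have JL: "J \<subseteq> L"
    using J unfolding is_op_ideal_def by blast
  have L: "T \<in> L"
    using T op_closure_subset by blast
  then show "(\<lambda>x. sscale c (T x)) \<in> L"
    by (rule bounded_ops_sscale_lorentz)
  fix e :: real
  assume "0 < e"
  define d where "d = e / (2 * (\<bar>c\<bar> + 1))"
  have "0 < d"
    unfolding d_def using \<open>0 < e\<close> by (simp add: add_pos_nonneg)
  have "\<bar>c\<bar> * d \<le> (\<bar>c\<bar> + 1) * d"
    using \<open>0 < d\<close> by (simp add: mult_right_mono)
  also have "\<dots> = e / 2"
    unfolding d_def by (simp add: field_simps add_pos_nonneg)
  also have "\<dots> < e"
    using \<open>0 < e\<close> by simp
  finally have "\<bar>c\<bar> * d < e" .
  obtain S where S: "S \<in> J" "\<And>x. x \<in> X \<Longrightarrow> N (sminus (T x) (S x)) \<le> d * N x"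
    using op_closureD[OF T JL \<open>0 < d\<close>] by blast
  have "N (sminus (sscale c (T x)) (sscale c (S x))) \<le> (\<bar>c\<bar> * d) * N x" if x: "x \<in> X" for x
  proof -
    have "sminus (sscale c (T x)) (sscale c (S x)) = sscale c (sminus (T x) (S x))"
      by (auto simp: sminus_def sscale_def algebra_simps)
    moreover have "S \<in> L"
      using S(1) JL by blast
    then have "sminus (T x) (S x) \<in> X"
      using L x by (simp add: sminus_lorentz bounded_ops_into)
    ultimately show ?thesis
      using S(2)[OF x] sscale_lorentz(2) by (simp add: mult.assoc mult_left_mono)
  qed
  moreover have "(\<lambda>x. sscale c (S x)) \<in> J"
    using J S(1) unfolding is_op_ideal_def by blast
  ultimately show "\<exists>S\<in>J. \<exists>d. 0 \<le> d \<and> d < e \<and> (\<forall>x\<in>X. N (sminus (sscale c (T x)) (S x)) \<le> d * N x)"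
    using \<open>0 < d\<close> \<open>\<bar>c\<bar> * d < e\<close> by (intro bexI[of _ "\<lambda>x. sscale c (S x)"] exI[of _ "\<bar>c\<bar> * d"]) auto
qed

lemma op_closure_comp:
  assumes J: "is_op_ideal N X J" and T: "T \<in> op_closure N X J" and A: "A \<in> L" and B: "B \<in> L"
  shows "A \<circ> T \<circ> B \<in> op_closure N X J"
proof (rule op_closureI)
  have JL: "J \<subseteq> L"
    using J unfolding is_op_ideal_def by blast
  have L: "T \<in> L"
    using T op_closure_subset by blast
  then show "A \<circ> T \<circ> B \<in> L"
    using A B szero_lorentz(1) lorentz_norm_nonneg by (intro bounded_ops_comp) auto
  obtain CA where "0 < CA" and CA: "\<And>x. x \<in> X \<Longrightarrow> N (A x) \<le> CA * N x"
    using bounded_ops_pos_bound[OF A lorentz_norm_nonneg] by blast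
  obtain CB where "0 < CB" and CB: "\<And>x. x \<in> X \<Longrightarrow> N (B x) \<le> CB * N x"
    using bounded_ops_pos_bound[OF B lorentz_norm_nonneg] by blast
  fix e :: real
  assume "0 < e"
  define d where "d = e / (2 * CA * CB)"
  have "0 < d" "CA * CB * d < e"
    unfolding d_def using \<open>0 < e\<close> \<open>0 < CA\<close> \<open>0 < CB\<close> by (auto simp: field_simps)
  obtain S where S: "S \<in> J" "\<And>x. x \<in> X \<Longrightarrow> N (sminus (T x) (S x)) \<le> d * N x"
    using op_closureD[OF T JL \<open>0 < d\<close>] by blast
  have "N (sminus ((A \<circ> T \<circ> B) x) ((A \<circ> S \<circ> B) x)) \<le> (CA * CB * d) * N x" if x: "x \<in> X" for x
  proof -
    have Bx: "B x \<in> X"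
      using bounded_ops_into[OF B x] .
    have "S \<in> L"
      using S(1) JL by blast
    then have in_X: "T (B x) \<in> X" "S (B x) \<in> X"
      using L Bx by (simp_all add: bounded_ops_into)
    have "N (sminus ((A \<circ> T \<circ> B) x) ((A \<circ> S \<circ> B) x)) = N (A (sminus (T (B x)) (S (B x))))"
      using bounded_ops_sminus_apply[OF A in_X] by simp
    also have "\<dots> \<le> CA * N (sminus (T (B x)) (S (B x)))"
      using CA sminus_lorentz[OF in_X] by blast
    also have "\<dots> \<le> CA * (d * (CB * N x))"
      using S(2)[OF Bx] CB[OF x] \<open>0 < CA\<close> \<open>0 < d\<close>
      by (intro mult_left_mono) (auto intro: order.trans)
    finally show ?thesis
      by (simp add: algebra_simps)
  qed
  moreover have "A \<circ> S \<circ> B \<in> J"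
    using J S(1) A B unfolding is_op_ideal_def by blast
  ultimately show "\<exists>S\<in>J. \<exists>c. 0 \<le> c \<and> c < e \<and> (\<forall>x\<in>X. N (sminus ((A \<circ> T \<circ> B) x) (S x)) \<le> c * N x)"
    using \<open>0 < d\<close> \<open>0 < CA\<close> \<open>0 < CB\<close> \<open>CA * CB * d < e\<close>
    by (intro bexI[of _ "A \<circ> S \<circ> B"] exI[of _ "CA * CB * d"]) auto
qed

lemma op_closure_ideal:
  assumes "is_op_ideal N X J"
  shows "is_op_ideal N X (op_closure N X J)"
proof -
  have "(\<lambda>x. szero) \<in> op_closure N X J"
    using assms subset_op_closure unfolding is_op_ideal_def by blast
  then show ?thesis
    unfolding is_op_ideal_def
    using op_closure_subset op_closure_splus[OF assms] op_closure_sscale[OF assms]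
      op_closure_comp[OF assms] by blast
qed

section \<open>Operators into \<open>\<ell>\<^sub>p\<close>\<close>

lemma sum_w_ge_1: "1 \<le> m \<Longrightarrow> 1 \<le> (\<Sum>n<m. w n)"
  using sum_lessThan_split[of 1 m w] w_0 w_nonneg by (simp add: sum_nonneg)

lemma lorentz_norm_sign_vector_le:
  assumes "finite F" "\<And>k. k \<in> F \<Longrightarrow> \<bar>s k\<bar> = 1" "1 \<le> card F"
  shows "N (sign_vector F s) \<le> (\<Sum>n<card F. w n)"
proof -
  have "(\<Sum>n<card F. w n) powr (1 / p) \<le> (\<Sum>n<card F. w n) powr 1"
    using sum_w_ge_1[OF assms(3)] p_ge_1 by (intro powr_mono) auto
  then show ?thesis
    using sign_vector_lorentz(2)[OF assms(1,2)] sum_w_ge_1[OF assms(3)] by simp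
qed

text \<open>Testing \<open>A\<close> on a sum of \<open>m\<close> unit vectors with suitable signs: the \<open>j\<close>-th coordinate
  would grow linearly in \<open>m\<close>, while the Lorentz norm of the sum grows like \<open>\<Sum>\<^sub>n\<^sub><\<^sub>m w\<^sub>n = o(m)\<close>.\<close>
lemma bounded_ops_unit_vector_coord_tendsto_0:
  assumes A: "A \<in> bounded_ops N X NP LP"
  shows "(\<lambda>n. A (unit_vector n) j) \<longlonglongrightarrow> 0"
proof (rule ccontr)
  assume "\<not> ?thesis"
  then obtain d where "0 < d" and frequent: "\<And>n0. \<exists>n\<ge>n0. d \<le> \<bar>A (unit_vector n) j\<bar>"
    unfolding LIMSEQ_iff by (auto simp: not_less)
  then have "infinite {n. d \<le> \<bar>A (unit_vector n) j\<bar>}"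
    unfolding infinite_nat_iff_unbounded_le by auto
  obtain C where "0 < C" and C: "\<And>x. x \<in> X \<Longrightarrow> NP (A x) \<le> C * N x"
    using bounded_ops_pos_bound[OF A lorentz_norm_nonneg] by blast
  obtain m where "1 \<le> m" and m: "(\<Sum>n<m. w n) \<le> d / (2 * C) * real m"
    using cesaro_mean_small[OF w_tendsto_0, of "d / (2 * C)"] \<open>0 < d\<close> \<open>0 < C\<close> by auto
  obtain F where F: "finite F" "card F = m" "F \<subseteq> {n. d \<le> \<bar>A (unit_vector n) j\<bar>}"
    using infinite_arbitrarily_large[OF \<open>infinite _\<close>] by blast
  define s where "s n = (if 0 \<le> A (unit_vector n) j then 1 else - 1 :: real)" for n
  have signs: "\<And>k. k \<in> F \<Longrightarrow> \<bar>s k\<bar> = 1"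
    by (simp add: s_def)
  have x: "sign_vector F s \<in> X"
    using sign_vector_lorentz(1)[of F s, OF F(1) signs] .
  have "(\<Sum>n\<in>F. d) \<le> (\<Sum>n\<in>F. \<bar>A (unit_vector n) j\<bar>)"
    using F(3) by (intro sum_mono) auto
  then have "real m * d \<le> (\<Sum>n\<in>F. \<bar>A (unit_vector n) j\<bar>)"
    using F(2) by simp
  also have "\<dots> = (\<Sum>n\<in>F. s n * A (unit_vector n) j)"
    by (rule sum.cong) (auto simp: s_def)
  also have "\<dots> = A (sign_vector F s) j"
    by (rule bounded_ops_sign_vector[OF A F(1) signs, symmetric])
  also have "\<dots> \<le> NP (A (sign_vector F s))"
    using abs_le_lp_norm[OF bounded_ops_into[OF A x], of j] by simp
  also have "\<dots> \<le> C * (\<Sum>n<m. w n)"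
    using C[OF x] lorentz_norm_sign_vector_le[of F s, OF F(1) signs] F(2)
      \<open>1 \<le> m\<close> \<open>0 < C\<close> by (auto intro: order.trans mult_left_mono)
  also have "\<dots> \<le> real m * d / 2"
    using mult_left_mono[OF m, of C] \<open>0 < C\<close> by (simp add: algebra_simps)
  finally show False
    using \<open>0 < d\<close> \<open>1 \<le> m\<close> by simp
qed

lemma lp_sum_image_sum_unit_vectors_le:
  assumes A: "A \<in> bounded_ops N X NP LP" and C: "\<And>x. x \<in> X \<Longrightarrow> NP (A x) \<le> C * N x" "0 < C"
    and inj: "inj_on nk {..<m}"
  shows "(\<Sum>j<b. \<bar>\<Sum>i<m. A (unit_vector (nk i)) j\<bar> powr p) \<le> C powr p * (\<Sum>n<m. w n)"
proof -
  define F where "F = nk ` {..<m}"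
  have F: "finite F" "card F = m"
    unfolding F_def using inj by (simp_all add: card_image)
  have x: "sign_vector F (\<lambda>_. 1) \<in> X"
    using sign_vector_lorentz(1)[where s = "\<lambda>_. 1", OF F(1)] by simp
  define z where "z = A (sign_vector F (\<lambda>_. 1))"
  have z: "z \<in> LP"
    unfolding z_def using bounded_ops_into[OF A x] .
  have "z j = (\<Sum>i<m. A (unit_vector (nk i)) j)" for j
  proof -
    have "z j = (\<Sum>n\<in>F. 1 * A (unit_vector n) j)"
      unfolding z_def by (rule bounded_ops_sign_vector[where s = "\<lambda>_. 1", OF A F(1)]) simp
    then show ?thesis
      unfolding F_def using sum.reindex[OF inj] by simp
  qed
  then have "(\<Sum>j<b. \<bar>\<Sum>i<m. A (unit_vector (nk i)) j\<bar> powr p) \<le> lp_sum z"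
    using sum_le_suminf[OF lp_summable[OF z], of "{..<b}"] by simp
  also have "\<dots> \<le> (C * N (sign_vector F (\<lambda>_. 1))) powr p"
    using C(1)[OF x] unfolding z_def by (intro lp_sum_le z[unfolded z_def])
  also have "\<dots> = C powr p * (\<Sum>n<m. w n)"
    using sign_vector_lorentz(2)[where s = "\<lambda>_. 1", OF F(1)] F(2) C(2) p_pos w_nonneg
    by (simp add: powr_mult powr_powr sum_nonneg)
  finally show ?thesis .
qed

lemma bounded_ops_unit_vector_images_not_bounded_below:
  assumes A: "A \<in> bounded_ops N X NP LP" and "0 < c"
  shows "\<exists>n. NP (A (unit_vector n)) < c"
proof (rule ccontr)
  assume "\<nexists>n. NP (A (unit_vector n)) < c"
  then have c: "c \<le> NP (A (unit_vector n))" for n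
    by (simp add: not_less)
  define y where "y n = A (unit_vector n)" for n
  have y: "y n \<in> LP" for n
    unfolding y_def using bounded_ops_into[OF A unit_vector_lorentz(1)] .
  have lower: "c powr p \<le> lp_sum (y n)" for n
    using powr_mono2[of p c "NP (y n)"] c[of n] \<open>0 < c\<close> p_pos lp_norm_powr[OF y] by (simp add: y_def)
  obtain C where "0 < C" and C: "\<And>x. x \<in> X \<Longrightarrow> NP (A x) \<le> C * N x"
    using bounded_ops_pos_bound[OF A lorentz_norm_nonneg] by blast
  define \<delta> where "\<delta> = c powr p / 2 powr (p + 2)"
  have "0 < \<delta>"
    unfolding \<delta>_def using \<open>0 < c\<close> by simp
  obtain m where "1 \<le> m" and m: "(\<Sum>n<m. w n) \<le> \<delta> / (2 * C powr p) * real m"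
    using cesaro_mean_small[OF w_tendsto_0, of "\<delta> / (2 * C powr p)"] \<open>0 < \<delta>\<close> \<open>0 < C\<close> by auto
  obtain nk b where "strict_mono nk" and hump: "real m * \<delta> \<le> (\<Sum>j<b. \<bar>\<Sum>i<m. y (nk i) j\<bar> powr p)"
    using lp_sum_lower_estimate[OF y bounded_ops_unit_vector_coord_tendsto_0[OF A, folded y_def], of "c powr p" m]
      lower \<open>0 < c\<close> unfolding \<delta>_def by auto
  have "real m * \<delta> \<le> C powr p * (\<Sum>n<m. w n)"
    using hump lp_sum_image_sum_unit_vectors_le[OF A C \<open>0 < C\<close> strict_mono_imp_inj_on[OF \<open>strict_mono nk\<close>]]
    unfolding y_def by (rule order.trans)
  also have "\<dots> \<le> real m * \<delta> / 2"
    using mult_left_mono[OF m, of "C powr p"] \<open>0 < C\<close> by (simp add: algebra_simps)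
  finally show False
    using \<open>0 < \<delta>\<close> \<open>1 \<le> m\<close> by simp
qed

section \<open>Operators factoring through \<open>\<ell>\<^sub>p\<close>\<close>

lemma factor_lpE:
  assumes "T \<in> factor_lp w p"
  obtains A B where "T = B \<circ> A" "A \<in> bounded_ops N X NP LP" "B \<in> bounded_ops NP LP N X"
  using assms unfolding factor_lp_def by blast

lemma factor_lpI:
  "A \<in> bounded_ops N X NP LP \<Longrightarrow> B \<in> bounded_ops NP LP N X \<Longrightarrow> B \<circ> A \<in> factor_lp w p"
  unfolding factor_lp_def by blast

lemma factor_lp_subset: "factor_lp w p \<subseteq> L"
  using bounded_ops_comp[OF _ _ szero_lp(1) lp_norm_nonneg] by (auto elim!: factor_lpE)

lemma factor_lp_szero: "(\<lambda>x. szero) \<in> factor_lp w p"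
proof -
  have "(\<lambda>x. szero) \<in> bounded_ops N X NP LP" "(\<lambda>x. szero) \<in> bounded_ops NP LP N X"
    using szero_lp szero_lorentz lorentz_norm_nonneg lp_norm_nonneg
    by (simp_all add: bounded_ops_const_szero)
  then have "(\<lambda>x. szero) \<circ> (\<lambda>x. szero) \<in> factor_lp w p"
    by (rule factor_lpI)
  then show ?thesis
    by (simp add: o_def)
qed

lemma factor_lp_sscale: "T \<in> factor_lp w p \<Longrightarrow> (\<lambda>x. sscale c (T x)) \<in> factor_lp w p"
proof (elim factor_lpE)
  fix A B
  assume "T = B \<circ> A" "A \<in> bounded_ops N X NP LP" "B \<in> bounded_ops NP LP N X"
  then show "(\<lambda>x. sscale c (T x)) \<in> factor_lp w p"
    using factor_lpI[OF _ bounded_ops_sscale_lorentz] by (simp add: o_def)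
qed

lemma factor_lp_comp: "T \<in> factor_lp w p \<Longrightarrow> U \<in> L \<Longrightarrow> V \<in> L \<Longrightarrow> U \<circ> T \<circ> V \<in> factor_lp w p"
proof (elim factor_lpE)
  fix A B
  assume "T = B \<circ> A" "A \<in> bounded_ops N X NP LP" "B \<in> bounded_ops NP LP N X" "U \<in> L" "V \<in> L"
  moreover have "A \<circ> V \<in> bounded_ops N X NP LP" "U \<circ> B \<in> bounded_ops NP LP N X"
    using calculation szero_lorentz(1) lorentz_norm_nonneg by (auto intro: bounded_ops_comp)
  moreover have "U \<circ> T \<circ> V = (U \<circ> B) \<circ> (A \<circ> V)"
    using \<open>T = B \<circ> A\<close> by (simp add: comp_assoc)
  ultimately show "U \<circ> T \<circ> V \<in> factor_lp w p"
    using factor_lpI by simp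
qed

lemma factor_lp_splus:
  assumes "S \<in> factor_lp w p" "T \<in> factor_lp w p"
  shows "(\<lambda>x. splus (S x) (T x)) \<in> factor_lp w p"
proof -
  obtain A1 B1 where S: "S = B1 \<circ> A1"
    and A1: "A1 \<in> bounded_ops N X NP LP" and B1: "B1 \<in> bounded_ops NP LP N X"
    using assms(1) by (rule factor_lpE)
  obtain A2 B2 where T: "T = B2 \<circ> A2"
    and A2: "A2 \<in> bounded_ops N X NP LP" and B2: "B2 \<in> bounded_ops NP LP N X"
    using assms(2) by (rule factor_lpE)
  define A where "A x = interleave (A1 x) (A2 x)" for x
  define B where "B z = splus (B1 (reindex_op (\<lambda>n. 2 * n) z)) (B2 (reindex_op (\<lambda>n. Suc (2 * n)) z))"
    for z
  have A: "A \<in> bounded_ops N X NP LP"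
    unfolding A_def using A1 A2 lorentz_norm_nonneg by (rule bounded_ops_interleave)
  have "inj (\<lambda>n :: nat. 2 * n)" "inj (\<lambda>n :: nat. 2 * n + 1)"
    by (auto intro: injI)
  then have "B1 \<circ> reindex_op (\<lambda>n. 2 * n) \<in> bounded_ops NP LP N X"
    "B2 \<circ> reindex_op (\<lambda>n. Suc (2 * n)) \<in> bounded_ops NP LP N X"
    using B1 B2 szero_lp(1) lp_norm_nonneg by (auto intro: bounded_ops_comp reindex_op_bounded)
  then have B: "B \<in> bounded_ops NP LP N X"
    unfolding B_def using bounded_ops_splus_lorentz[OF _ _ lp_norm_nonneg] by (simp add: o_def)
  have "A x \<in> LP" for x
    using bounded_ops_into[OF A, of x] bounded_ops_outside[OF A, of x] szero_lp(1) by (cases "x \<in> X") auto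
  then have "B (A x) = splus (S x) (T x)" for x
    unfolding B_def S T by (simp add: reindex_op_def A_def)
  then have "(\<lambda>x. splus (S x) (T x)) = B \<circ> A"
    by auto
  then show ?thesis
    using factor_lpI[OF A B] by simp
qed

lemma factor_lp_ideal: "is_op_ideal N X (factor_lp w p)"
  unfolding is_op_ideal_def
  using factor_lp_subset factor_lp_szero factor_lp_splus factor_lp_sscale factor_lp_comp by blast

definition lorentz_id :: "seq \<Rightarrow> seq" where
  "lorentz_id x = (if x \<in> X then x else szero)"

lemma lorentz_id_bounded: "lorentz_id \<in> L"
  by (rule bounded_opsI[where C = 1])
     (auto simp: lorentz_id_def splus_lorentz sscale_lorentz)

lemma lorentz_id_not_in_closure: "lorentz_id \<notin> op_closure N X (factor_lp w p)"
proof
  assume "lorentz_id \<in> op_closure N X (factor_lp w p)"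
  then obtain S where "S \<in> factor_lp w p" and S: "\<And>x. x \<in> X \<Longrightarrow> N (sminus (lorentz_id x) (S x)) \<le> 1 / 2 * N x"
    using op_closureD[OF _ factor_lp_subset, of lorentz_id "1 / 2"] by auto
  obtain A B where SBA: "S = B \<circ> A"
    and A: "A \<in> bounded_ops N X NP LP" and B: "B \<in> bounded_ops NP LP N X"
    using \<open>S \<in> factor_lp w p\<close> by (rule factor_lpE)
  obtain C where "0 < C" and C: "\<And>z. z \<in> LP \<Longrightarrow> N (B z) \<le> C * NP z"
    using bounded_ops_pos_bound[OF B lp_norm_nonneg] by blast
  have "1 / (2 * C) \<le> NP (A (unit_vector n))" for n
  proof -
    let ?e = "unit_vector n"
    have e: "?e \<in> X"
      by (rule unit_vector_lorentz(1))
    have "S \<in> L"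
      using \<open>S \<in> factor_lp w p\<close> factor_lp_subset by blast
    then have Se: "S ?e \<in> X"
      using bounded_ops_into e by blast
    have "\<bar>1 - S ?e n\<bar> \<le> N (sminus ?e (S ?e))"
      using abs_le_lorentz_norm[OF sminus_lorentz[OF e Se], where k = n]
      by (simp add: sminus_def)
    also have "\<dots> \<le> 1 / 2"
      using S[OF e] e unit_vector_lorentz(2) by (simp add: lorentz_id_def)
    finally have "1 / 2 \<le> S ?e n"
      by linarith
    also have "\<dots> \<le> N (S ?e)"
      using abs_le_lorentz_norm[OF Se, where k = n] by simp
    also have "\<dots> \<le> C * NP (A ?e)"
      unfolding SBA using C bounded_ops_into[OF A e] by simp
    finally show ?thesis
      using \<open>0 < C\<close> by (simp add: field_simps)
  qed
  then show False
    using bounded_ops_unit_vector_images_not_bounded_below[OF A, of "1 / (2 * C)"] \<open>0 < C\<close>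
    by (auto simp: not_less[symmetric])
qed

lemma factor_lp_proper_ideals:
  "proper_op_ideal N X (factor_lp w p) \<and> proper_op_ideal N X (op_closure N X (factor_lp w p))"
  unfolding proper_op_ideal_def
  using factor_lp_ideal op_closure_ideal[OF factor_lp_ideal] lorentz_id_not_in_closure
    lorentz_id_bounded subset_op_closure[OF factor_lp_subset] by blast

end

theorem theorem2p3:
  fixes p :: real and w :: "nat \<Rightarrow> real"
  assumes "1 \<le> p"
    and "w 0 = 1" and "decseq w" and "w \<longlonglongrightarrow> 0" and "\<not> summable w"
  shows "proper_op_ideal (lorentz_norm w p) (lorentz_space w p) (factor_lp w p)
       \<and> proper_op_ideal (lorentz_norm w p) (lorentz_space w p)
           (op_closure (lorentz_norm w p) (lorentz_space w p) (factor_lp w p))"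
proof -
  interpret lorentz_weight w p
    using assms by unfold_locales
  show ?thesis
    by (rule factor_lp_proper_ideals)
qed

end
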